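(* Let $\mathcal{A}\in\mathbb{R}^{m\times n\times p}$, $\mathcal{B}\in\mathbb{R}^{m\times l\times p}$, let $T\subset\mathcal{P}([n])$ be a finite nonempty collection of column blocks, and let $\omega>0$. Let $\mathcal{X}^{(k)}$ be the iterates of the TRBAGS method (defined in the context) with step size $\omega$, started from a fixed initial tensor $\mathcal{X}^{(0)}\in\mathbb{R}^{n\times l\times p}$, where the blocks $\tau_1,\tau_2,\dots$ are sampled independently and uniformly from $T$. Let $\mathcal{X}^\ddagger$ be a minimizer of $\|\mathcal{A}\mathcal{X}-\mathcal{B}\|_F^2$, let $\sigma^2=\max_{\tau\in T}\sigma_{\max}^2(\mathrm{bcirc}(\mathcal{A}_{:\tau:}))$ and $c_{\min}(T)=\min_{i\in[n]}|\{\tau\in T: i\in\tau\}|$. Suppose $2\omega-\omega^2\sigma^2>0$ and set $$\rho=1-(2\omega-\omega^2\sigma^2)\frac{c_{\min}(T)}{|T|}\sigma_{\min}^2(\mathrm{bcirc}(\mathcal{A})).$$ Then for every $k\ge0$, $$\mathbb{E}\big[\|\mathcal{A}\mathcal{X}^{(k)}-\mathcal{A}\mathcal{X}^\ddagger\|_F^2\,\big|\,\mathcal{X}^{(0)}\big]\le\rho^k\,\|\mathcal{A}\mathcal{X}^{(0)}-\mathcal{A}\mathcal{X}^\ddagger\|_F^2.$$ If, in addition, the system $\mathcal{A}\mathcal{X}=\mathcal{A}\mathcal{X}^\ddagger$ has the unique solution $\mathcal{X}=\mathcal{X}^\ddagger$, then for every $k\ge0$, $$\mathbb{E}\big[\|\mathcal{X}^{(k)}-\mathcal{X}^\ddagger\|_F^2\,\big|\,\mathcal{X}^{(0)}\big]\le\kappa^2(\mathcal{A})\,\rho^k\,\|\mathcal{X}^{(0)}-\mathcal{X}^\ddagger\|_F^2,$$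 where $\kappa^2(\mathcal{A}):=\sigma_{\max}^2(\mathrm{bcirc}(\mathcal{A}^\dagger))\,\sigma_{\max}^2(\mathrm{bcirc}(\mathcal{A}))$.
   Context: All tensors are real third-order arrays. For $\mathcal{A}\in\mathbb{R}^{m\times n\times p}$ with frontal slices $\mathcal{A}_1,\dots,\mathcal{A}_p\in\mathbb{R}^{m\times n}$, $\mathrm{bcirc}(\mathcal{A})\in\mathbb{R}^{mp\times np}$ is the block-circulant matrix whose $(i,j)$ block ($i,j\in[p]$) is $\mathcal{A}_{((i-j)\bmod p)+1}$ (so its first block column is $\mathcal{A}_1,\mathcal{A}_2,\dots,\mathcal{A}_p$). For $\mathcal{B}\in\mathbb{R}^{n\times l\times p}$, $\mathrm{unfold}(\mathcal{B})\in\mathbb{R}^{np\times l}$ stacks the frontal slices $\mathcal{B}_1,\dots,\mathcal{B}_p$ vertically, and $\mathrm{fold}$ is its inverse. The t-product is $\mathcal{A}\mathcal{B}=\mathrm{fold}(\mathrm{bcirc}(\mathcal{A})\,\mathrm{unfold}(\mathcal{B}))\in\mathbb{R}^{m\times l\times p}$. The transpose $\mathcal{A}^*\in\mathbb{R}^{n\times m\times p}$ is obtained by transposing each frontal slice and reversing the order of the transposed slices $2$ through $p$ (so $\mathrm{bcirc}(\mathcal{A}^* )=\mathrm{bcirc}(\mathcal{A})^\top$). The pseudoinverse $\mathcal{A}^\dagger$ is the tensor with $\mathrm{bcirc}(\mathcal{A}^\dagger)=\mathrm{bcirc}(\mathcal{A})^\dagger$ (Moore–Penrose pseudoinverse). $\|\cdot\|_F$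 is the Frobenius norm (square root of the sum of squares of all entries). $\sigma_{\min}(\mathbf{M}),\sigma_{\max}(\mathbf{M})$ are the smallest and largest singular values of a matrix $\mathbf{M}$. For $\tau\subset[n]$, $\mathcal{A}_{:\tau:}\in\mathbb{R}^{m\times|\tau|\times p}$ consists of the lateral slices (columns) of $\mathcal{A}$ indexed by $\tau$, and $\mathcal{E}_\tau\in\mathbb{R}^{n\times|\tau|\times p}$ is the tensor whose first frontal slice consists of the columns of $I_n$ indexed by $\tau$ and whose other frontal slices are zero (so $\mathcal{A}\mathcal{E}_\tau=\mathcal{A}_{:\tau:}$). $\mathcal{P}([n])$ is the power set of $[n]=\{1,\dots,n\}$. TRBAGS method with step size $\omega$: given $\mathcal{X}^{(0)}$, for $k=1,2,\dots$ sample $\tau_k$ and set $\mathcal{X}^{(k)}=\mathcal{X}^{(k-1)}-\omega\,\mathcal{E}_{\tau_k}\mathcal{A}_{:\tau_k:}^*(\mathcal{A}\mathcal{X}^{(k-1)}-\mathcal{B})$. *)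

theory Defs
  imports "Jordan_Normal_Form.Char_Poly"
begin

text \<open>Representation: a third-order tensor of size a x b x p is represented by its
  unfolding, i.e. a real matrix of size (a*p) x b whose row block number k (rows k*a .. k*a+a-1)
  is the frontal slice k+1.  All indices are 0-based; [n] is represented by {..<n}.\<close>

definition bcirc :: "nat \<Rightarrow> real mat \<Rightarrow> real mat" where
  "bcirc p A = (let a = dim_row A div p; b = dim_col A in
     mat (a * p) (b * p)
       (\<lambda>(r, c). A $$ (((r div a + p - c div b) mod p) * a + r mod a, c mod b)))"

text \<open>t-product: fold (bcirc A * unfold B); with the unfolded representation fold/unfold are identities.\<close>
definition tprod :: "nat \<Rightarrow> real mat \<Rightarrow> real mat \<Rightarrow> real mat" where
  "tprod p A B = bcirc p A * B"

text \<open>Tensor transpose: transpose each frontal slice and reverse slices 2..p.\<close>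
definition ttrans :: "nat \<Rightarrow> real mat \<Rightarrow> real mat" where
  "ttrans p A = (let a = dim_row A div p; b = dim_col A in
     mat (b * p) a (\<lambda>(r, c). A $$ (((p - r div b) mod p) * a + c, r mod b)))"

text \<open>E_tau (n x |tau| x p): first slice = columns of I_n indexed by tau (in increasing order), other slices zero.\<close>
definition Etau :: "nat \<Rightarrow> nat \<Rightarrow> nat set \<Rightarrow> real mat" where
  "Etau n p \<tau> = mat (n * p) (card \<tau>)
     (\<lambda>(r, c). if r = sorted_list_of_set \<tau> ! c then 1 else 0)"

definition lat_slices :: "nat \<Rightarrow> nat \<Rightarrow> real mat \<Rightarrow> nat set \<Rightarrow> real mat" where
  "lat_slices n p A \<tau> = tprod p A (Etau n p \<tau>)"

definition fro_norm :: "real mat \<Rightarrow> real" where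
  "fro_norm M = sqrt (\<Sum>i<dim_row M. \<Sum>j<dim_col M. (M $$ (i, j))\<^sup>2)"

text \<open>Singular values of M: square roots of the eigenvalues of M^T M (if #cols <= #rows)
  resp. of M M^T (otherwise); there are min(#rows,#cols) of them.\<close>
definition gram :: "real mat \<Rightarrow> real mat" where
  "gram M = (if dim_col M \<le> dim_row M then transpose_mat M * M else M * transpose_mat M)"

definition sigma_max :: "real mat \<Rightarrow> real" where
  "sigma_max M = (if dim_row M = 0 \<or> dim_col M = 0 then 0
                  else sqrt (Max {ev. eigenvalue (gram M) ev}))"

definition sigma_min :: "real mat \<Rightarrow> real" where
  "sigma_min M = (if dim_row M = 0 \<or> dim_col M = 0 then 0
                  else sqrt (Min {ev. eigenvalue (gram M) ev}))"

definition pinv :: "real mat \<Rightarrow> real mat" where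
  "pinv M = (THE X. X \<in> carrier_mat (dim_col M) (dim_row M) \<and>
       M * X * M = M \<and> X * M * X = X \<and>
       transpose_mat (M * X) = M * X \<and> transpose_mat (X * M) = X * M)"

definition trbags_step :: "nat \<Rightarrow> nat \<Rightarrow> real mat \<Rightarrow> real mat \<Rightarrow> real \<Rightarrow> real mat \<Rightarrow> nat set \<Rightarrow> real mat" where
  "trbags_step n p A B \<omega> X \<tau> =
     X - \<omega> \<cdot>\<^sub>m tprod p (Etau n p \<tau>)
                   (tprod p (ttrans p (lat_slices n p A \<tau>)) (tprod p A X - B))"

definition trbags_iter :: "nat \<Rightarrow> nat \<Rightarrow> real mat \<Rightarrow> real mat \<Rightarrow> real \<Rightarrow> real mat \<Rightarrow> nat set list \<Rightarrow> real mat" where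
  "trbags_iter n p A B \<omega> X0 \<tau>s = foldl (trbags_step n p A B \<omega>) X0 \<tau>s"

text \<open>Expectation of f over tau_1..tau_k drawn i.i.d. uniformly from the finite set T.\<close>
definition expect_blocks :: "nat set set \<Rightarrow> nat \<Rightarrow> (nat set list \<Rightarrow> real) \<Rightarrow> real" where
  "expect_blocks T k f =
     (\<Sum>\<tau>s\<in>{\<tau>s. set \<tau>s \<subseteq> T \<and> length \<tau>s = k}. f \<tau>s) / real (card T) ^ k"

definition c_min :: "nat \<Rightarrow> nat set set \<Rightarrow> nat" where
  "c_min n T = Min ((\<lambda>i. card {\<tau>\<in>T. i \<in> \<tau>}) ` {..<n})"

end

(*
  Write M = bcirc(A), so that the t-product with A is multiplication by M. One TRBAGS step
  with block tau is a gradient step for ||M X - B||_F^2 restricted to the columns selected by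
  the 0/1 matrix Q = bcirc(E_tau), and N = M Q = bcirc(A_{:tau:}). Since X^dd satisfies the
  normal equation M^T (M X^dd - B) = 0, the step maps the residual e = M (X - X^dd) to
  e - omega N N^T e, whence
      ||e'||^2 <= ||e||^2 - (2 omega - omega^2 sigma^2) ||Q^T M^T e||^2.
  Here ||Q^T M^T e||^2 is the sum of the squared rows of M^T e whose index lies in tau modulo n.
  Summed over T, every row is counted at least c_min(T) times, and ||M^T e||^2 >=
  sigma_min^2(M) ||e||^2 because e lies in the range of M. Averaging over the uniformly drawn
  block gives the factor rho for one step, and since the draws are independent the factor
  is rho^k after k steps.
  If X^dd is the unique solution, M is injective, pinv(M) M = I, and the error bound follows
  from ||X - X^dd|| <= sigma_max(pinv M) ||M (X - X^dd)|| and
  ||M (X0 - X^dd)|| <= sigma_max(M) ||X0 - X^dd||.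
  The singular-value estimates rest on the Rayleigh-quotient characterisation of the
  extreme eigenvalues of a symmetric matrix, obtained by maximising the quadratic form
  over the compact unit sphere.
*)

theory Submission
  imports Defs "HOL-Analysis.Function_Topology"
begin

section \<open>Rayleigh quotients of symmetric matrices\<close>

lemma quadratic_nonpos_imp_linear_coeff_zero:
  fixes b c :: real
  assumes "\<And>t. 2 * t * b + t\<^sup>2 * c \<le> 0"
  shows "b = 0"
proof (rule ccontr)
  assume b: "b \<noteq> 0"
  define d where "d = \<bar>c\<bar> + 1"
  have d: "d > 0" "\<bar>c\<bar> < d" unfolding d_def by auto
  define t where "t = b / d"
  have "d\<^sup>2 * (2 * t * b + t\<^sup>2 * c) \<le> 0"
    using assms[of t] d by (simp add: mult_nonneg_nonpos)
  moreover have "d\<^sup>2 * (2 * t * b + t\<^sup>2 * c) = b\<^sup>2 * (2 * d + c)"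
    using d unfolding t_def by (simp add: field_simps power2_eq_square)
  moreover have "b\<^sup>2 * (2 * d + c) > 0" using b d by (intro mult_pos_pos) auto
  ultimately show False by linarith
qed

text \<open>Vectors of \<open>\<real>\<^sup>N\<close> are encoded as functions \<open>nat \<Rightarrow> real\<close> vanishing from \<open>N\<close> on,
  so that compactness of the unit sphere comes from the product topology.\<close>

definition coord_sphere :: "nat \<Rightarrow> (nat \<Rightarrow> real) set" where
  "coord_sphere N = {x. (\<forall>i\<ge>N. x i = 0) \<and> (\<Sum>i<N. (x i)\<^sup>2) = 1}"

definition quad_form :: "nat \<Rightarrow> (nat \<Rightarrow> nat \<Rightarrow> real) \<Rightarrow> (nat \<Rightarrow> real) \<Rightarrow> real" where
  "quad_form N G x = (\<Sum>i<N. \<Sum>j<N. G i j * x i * x j)"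

lemma compact_coord_sphere: "compact (coord_sphere N)"
proof -
  let ?K = "PiE UNIV (\<lambda>i::nat. if i < N then {-1..1::real} else {0})"
  have "compactin (product_topology (\<lambda>_. euclideanreal) UNIV) ?K"
    unfolding compactin_PiE by auto
  then have K: "compact ?K" by (simp add: euclidean_product_topology)
  have "closed {x::nat \<Rightarrow> real. (\<Sum>i<N. (x i)\<^sup>2) = 1}"
    by (rule closed_Collect_eq) (auto intro!: continuous_intros continuous_on_product_coordinates)
  moreover have "closed (\<Inter>i\<in>{N..}. {x::nat \<Rightarrow> real. x i = 0})"
    by (intro closed_INT ballI closed_Collect_eq)
       (auto intro!: continuous_intros continuous_on_product_coordinates)
  moreover have "coord_sphere N =
      {x. (\<Sum>i<N. (x i)\<^sup>2) = 1} \<inter> (\<Inter>i\<in>{N..}. {x. x i = 0}) \<inter> ?K"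
  proof -
    have "\<bar>x i\<bar> \<le> 1" if "x \<in> coord_sphere N" "i < N" for x i
    proof -
      have "(x i)\<^sup>2 \<le> (\<Sum>i<N. (x i)\<^sup>2)" using that(2) by (intro member_le_sum) auto
      then show ?thesis using that(1) by (simp add: coord_sphere_def abs_square_le_1)
    qed
    then show ?thesis unfolding coord_sphere_def by (auto simp: abs_le_iff)
  qed
  ultimately show ?thesis by (metis closed_Int closed_Int_compact K)
qed

lemma continuous_on_quad_form: "continuous_on UNIV (quad_form N G)"
  unfolding quad_form_def by (auto intro!: continuous_intros continuous_on_product_coordinates)

lemma quad_form_scale: "quad_form N G (\<lambda>i. c * x i) = c\<^sup>2 * quad_form N G x"
  unfolding quad_form_def by (simp add: sum_distrib_left power2_eq_square algebra_simps)

lemma quad_form_add: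
  assumes sym: "\<And>i j. G i j = G j i"
  shows "quad_form N G (\<lambda>i. x i + t * y i) =
    quad_form N G x + 2 * t * (\<Sum>i<N. (\<Sum>j<N. G i j * x j) * y i) + t\<^sup>2 * quad_form N G y"
proof -
  have swap: "(\<Sum>i<N. \<Sum>j<N. G i j * x i * y j) = (\<Sum>i<N. \<Sum>j<N. G i j * y i * x j)"
    by (subst sum.swap) (simp add: sym mult.commute mult.left_commute)
  have "quad_form N G (\<lambda>i. x i + t * y i) = quad_form N G x + t * (\<Sum>i<N. \<Sum>j<N. G i j * x i * y j)
      + t * (\<Sum>i<N. \<Sum>j<N. G i j * y i * x j) + t\<^sup>2 * quad_form N G y"
    unfolding quad_form_def by (simp add: algebra_simps sum.distrib sum_distrib_left power2_eq_square)
  also have "\<dots> = quad_form N G x + 2 * t * (\<Sum>i<N. \<Sum>j<N. G i j * y i * x j) + t\<^sup>2 * quad_form N G y"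
    unfolding swap by simp
  also have "(\<Sum>i<N. \<Sum>j<N. G i j * y i * x j) = (\<Sum>i<N. (\<Sum>j<N. G i j * x j) * y i)"
    by (simp add: sum_distrib_left sum_distrib_right mult.commute mult.left_commute)
  finally show ?thesis .
qed

lemma quad_form_le_max_on_coord_sphere:
  assumes max: "\<forall>z\<in>coord_sphere N. quad_form N G z \<le> \<mu>" and y: "\<forall>i\<ge>N. y i = 0"
  shows "quad_form N G y \<le> \<mu> * (\<Sum>i<N. (y i)\<^sup>2)"
proof (cases "(\<Sum>i<N. (y i)\<^sup>2) = 0")
  case True
  then have "\<forall>i<N. y i = 0" by (simp add: sum_nonneg_eq_0_iff)
  then show ?thesis using True by (simp add: quad_form_def)
next
  case False
  define s where "s = (\<Sum>i<N. (y i)\<^sup>2)"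
  have s: "s > 0" using False unfolding s_def by (simp add: less_le sum_nonneg)
  define z where "z = (\<lambda>i. (1 / sqrt s) * y i)"
  have "(\<Sum>i<N. (z i)\<^sup>2) = (1 / sqrt s)\<^sup>2 * s"
    unfolding z_def s_def by (simp only: power_mult_distrib sum_distrib_left)
  then have "z \<in> coord_sphere N" using y s unfolding coord_sphere_def z_def by (simp add: power_divide)
  moreover have "quad_form N G z = quad_form N G y / s"
    unfolding z_def quad_form_scale using s by (simp add: power_divide)
  ultimately have "quad_form N G y / s \<le> \<mu>" using max by auto
  then show ?thesis using s unfolding s_def by (simp add: divide_le_eq mult.commute)
qed

lemma quad_form_max_imp_eigen:
  assumes sym: "\<And>i j. G i j = G j i"
    and bound: "\<forall>y. (\<forall>i\<ge>N. y i = 0) \<longrightarrow> quad_form N G y \<le> \<mu> * (\<Sum>i<N. (y i)\<^sup>2)"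
    and x: "x \<in> coord_sphere N" and attained: "quad_form N G x = \<mu>" and k: "k < N"
  shows "(\<Sum>j<N. G k j * x j) = \<mu> * x k"
proof -
  define y where "y = (\<lambda>i. if i = k then (1::real) else 0)"
  have x0: "\<forall>i\<ge>N. x i = 0" and x1: "(\<Sum>i<N. (x i)\<^sup>2) = 1"
    using x unfolding coord_sphere_def by auto
  let ?b = "(\<Sum>i<N. (\<Sum>j<N. G i j * x j) * y i) - \<mu> * (\<Sum>i<N. x i * y i)"
  let ?c = "quad_form N G y - \<mu> * (\<Sum>i<N. (y i)\<^sup>2)"
  have "2 * t * ?b + t\<^sup>2 * ?c \<le> 0" for t
  proof -
    have "quad_form N G (\<lambda>i. x i + t * y i) \<le> \<mu> * (\<Sum>i<N. (x i + t * y i)\<^sup>2)"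
      using bound x0 k unfolding y_def by auto
    moreover have "(\<Sum>i<N. (x i + t * y i)\<^sup>2) =
        (\<Sum>i<N. (x i)\<^sup>2) + 2 * t * (\<Sum>i<N. x i * y i) + t\<^sup>2 * (\<Sum>i<N. (y i)\<^sup>2)"
      by (simp add: power2_eq_square algebra_simps sum.distrib sum_distrib_left)
    ultimately show ?thesis unfolding quad_form_add[OF sym] using x1 attained
      by (simp add: algebra_simps)
  qed
  then have "?b = 0" by (rule quadratic_nonpos_imp_linear_coeff_zero)
  then show ?thesis using k unfolding y_def by (simp add: if_distrib sum.delta cong: if_cong)
qed

lemma quad_form_max_eigen:
  assumes N: "N > 0" and sym: "\<And>i j. G i j = G j i"
  obtains x \<mu> where "x \<in> coord_sphere N" and "\<And>k. k < N \<Longrightarrow> (\<Sum>j<N. G k j * x j) = \<mu> * x k"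
    and "\<forall>y. (\<forall>i\<ge>N. y i = 0) \<longrightarrow> quad_form N G y \<le> \<mu> * (\<Sum>i<N. (y i)\<^sup>2)"
proof -
  have "(\<Sum>i<N. ((\<lambda>i. if i = 0 then 1 else 0) i :: real)\<^sup>2) = (\<Sum>i<N. if i = 0 then 1 else 0)"
    by (intro sum.cong) auto
  then have "(\<lambda>i. if i = 0 then 1 else 0) \<in> coord_sphere N"
    using N by (simp add: coord_sphere_def)
  then obtain x where x: "x \<in> coord_sphere N"
    and x_max: "\<forall>z\<in>coord_sphere N. quad_form N G z \<le> quad_form N G x"
    using continuous_attains_sup[OF compact_coord_sphere _ continuous_on_subset[OF continuous_on_quad_form]]
    by blast
  have bound: "\<forall>y. (\<forall>i\<ge>N. y i = 0) \<longrightarrow> quad_form N G y \<le> quad_form N G x * (\<Sum>i<N. (y i)\<^sup>2)"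
    using quad_form_le_max_on_coord_sphere[OF x_max] by blast
  show ?thesis using that[OF x quad_form_max_imp_eigen[OF sym bound x refl] bound] .
qed

lemma sym_mat_max_eigenvalue:
  fixes G :: "real mat"
  assumes G: "G \<in> carrier_mat N N" and N: "N > 0" and sym: "transpose_mat G = G"
  shows "\<exists>\<mu>. eigenvalue G \<mu> \<and> (\<forall>v\<in>carrier_vec N. v \<bullet> (G *\<^sub>v v) \<le> \<mu> * (v \<bullet> v))"
proof -
  define g where "g = (\<lambda>i j. if i < N \<and> j < N then G $$ (i, j) else 0)"
  have g_sym: "g i j = g j i" for i j
    using arg_cong[OF sym, of "\<lambda>A. A $$ (j, i)"] G unfolding g_def by auto
  obtain x \<mu> where x: "x \<in> coord_sphere N" and eigen: "\<And>k. k < N \<Longrightarrow> (\<Sum>j<N. g k j * x j) = \<mu> * x k"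
    and bound: "\<forall>y. (\<forall>i\<ge>N. y i = 0) \<longrightarrow> quad_form N g y \<le> \<mu> * (\<Sum>i<N. (y i)\<^sup>2)"
    by (rule quad_form_max_eigen[of N g, OF N g_sym]) blast
  define w where "w = vec N x"
  have w: "w \<in> carrier_vec N" unfolding w_def by auto
  have "w \<noteq> 0\<^sub>v N"
  proof
    assume "w = 0\<^sub>v N"
    then have "\<forall>i<N. x i = 0" unfolding w_def by (metis index_vec index_zero_vec(1))
    then show False using x by (simp add: coord_sphere_def)
  qed
  moreover have "G *\<^sub>v w = \<mu> \<cdot>\<^sub>v w"
  proof (rule eq_vecI)
    fix k assume "k < dim_vec (\<mu> \<cdot>\<^sub>v w)"
    then have k: "k < N" using w by simp
    have "(G *\<^sub>v w) $ k = (\<Sum>j<N. g k j * x j)"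
      using G k unfolding w_def g_def by (simp add: scalar_prod_def lessThan_atLeast0)
    then show "(G *\<^sub>v w) $ k = (\<mu> \<cdot>\<^sub>v w) $ k" using eigen k unfolding w_def by simp
  qed (use G w in auto)
  ultimately have "eigenvalue G \<mu>"
    unfolding eigenvalue_def eigenvector_def using w G by auto
  moreover have "v \<bullet> (G *\<^sub>v v) \<le> \<mu> * (v \<bullet> v)" if v: "v \<in> carrier_vec N" for v
  proof -
    define y where "y = (\<lambda>i. if i < N then v $ i else 0)"
    have "quad_form N g y = v \<bullet> (G *\<^sub>v v)"
      using v G unfolding quad_form_def g_def y_def
      by (simp add: scalar_prod_def lessThan_atLeast0 sum_distrib_left mult_ac)
    moreover have "(\<Sum>i<N. (y i)\<^sup>2) = v \<bullet> v"
      using v unfolding y_def by (simp add: scalar_prod_def lessThan_atLeast0 power2_eq_square)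
    ultimately show ?thesis using bound[rule_format, of y] unfolding y_def by auto
  qed
  ultimately show ?thesis by blast
qed

lemma sym_mat_min_eigenvalue:
  fixes G :: "real mat"
  assumes G: "G \<in> carrier_mat N N" and N: "N > 0" and sym: "transpose_mat G = G"
  shows "\<exists>\<mu>. eigenvalue G \<mu> \<and> (\<forall>v\<in>carrier_vec N. \<mu> * (v \<bullet> v) \<le> v \<bullet> (G *\<^sub>v v))"
proof -
  have "- G \<in> carrier_mat N N" "transpose_mat (- G) = - G" using G sym by (auto simp: transpose_uminus)
  then obtain \<mu> where ev: "eigenvalue (- G) \<mu>"
    and le: "\<forall>v\<in>carrier_vec N. v \<bullet> (- G *\<^sub>v v) \<le> \<mu> * (v \<bullet> v)"
    using sym_mat_max_eigenvalue N by blast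
  have "eigenvalue G (- \<mu>)"
  proof -
    obtain w where w: "w \<in> carrier_vec N" "w \<noteq> 0\<^sub>v N" "- G *\<^sub>v w = \<mu> \<cdot>\<^sub>v w"
      using ev G unfolding eigenvalue_def eigenvector_def by auto
    have "G *\<^sub>v w = - (- G *\<^sub>v w)" using w(1) G by simp
    also have "\<dots> = - \<mu> \<cdot>\<^sub>v w" unfolding w(3) by (intro eq_vecI) auto
    finally have "G *\<^sub>v w = - \<mu> \<cdot>\<^sub>v w" .
    then show ?thesis using w G unfolding eigenvalue_def eigenvector_def by auto
  qed
  moreover have "- \<mu> * (v \<bullet> v) \<le> v \<bullet> (G *\<^sub>v v)" if "v \<in> carrier_vec N" for v
    using le that G by auto
  ultimately show ?thesis by blast
qed

lemma finite_eigenvalues: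
  assumes G: "(G :: real mat) \<in> carrier_mat N N"
  shows "finite {ev. eigenvalue G ev}"
proof -
  have "char_poly G \<noteq> 0" using degree_monic_char_poly[OF G] by (metis coeff_0 zero_neq_one)
  then have "finite {ev. poly (char_poly G) ev = 0}" by (rule poly_roots_finite)
  then show ?thesis using eigenvalue_root_char_poly[OF G] by simp
qed

lemma sym_mat_quad_le_Max_eigenvalue:
  assumes G: "(G :: real mat) \<in> carrier_mat N N" and N: "N > 0" and sym: "transpose_mat G = G"
    and v: "v \<in> carrier_vec N"
  shows "v \<bullet> (G *\<^sub>v v) \<le> Max {ev. eigenvalue G ev} * (v \<bullet> v)"
proof -
  obtain \<mu> where "eigenvalue G \<mu>" and le: "v \<bullet> (G *\<^sub>v v) \<le> \<mu> * (v \<bullet> v)"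
    using sym_mat_max_eigenvalue[OF G N sym] v by blast
  then have "\<mu> \<le> Max {ev. eigenvalue G ev}" using finite_eigenvalues[OF G] by auto
  moreover have "v \<bullet> v \<ge> 0" using conjugate_square_ge_0_vec[of v] by simp
  ultimately show ?thesis using le by (meson mult_right_mono order_trans)
qed

lemma sym_mat_quad_ge_Min_eigenvalue:
  assumes G: "(G :: real mat) \<in> carrier_mat N N" and N: "N > 0" and sym: "transpose_mat G = G"
    and v: "v \<in> carrier_vec N"
  shows "Min {ev. eigenvalue G ev} * (v \<bullet> v) \<le> v \<bullet> (G *\<^sub>v v)"
proof -
  obtain \<mu> where "eigenvalue G \<mu>" and le: "\<mu> * (v \<bullet> v) \<le> v \<bullet> (G *\<^sub>v v)"
    using sym_mat_min_eigenvalue[OF G N sym] v by blast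
  then have "Min {ev. eigenvalue G ev} \<le> \<mu>" using finite_eigenvalues[OF G] by auto
  moreover have "v \<bullet> v \<ge> 0" using conjugate_square_ge_0_vec[of v] by simp
  ultimately show ?thesis using le by (meson mult_right_mono order_trans)
qed

lemma psd_eigenvalue_nonneg:
  assumes G: "(G :: real mat) \<in> carrier_mat N N" and psd: "\<forall>v\<in>carrier_vec N. 0 \<le> v \<bullet> (G *\<^sub>v v)"
    and ev: "eigenvalue G \<mu>"
  shows "0 \<le> \<mu>"
proof -
  obtain w where w: "w \<in> carrier_vec N" "w \<noteq> 0\<^sub>v N" "G *\<^sub>v w = \<mu> \<cdot>\<^sub>v w"
    using ev G unfolding eigenvalue_def eigenvector_def by auto
  have "0 < w \<bullet> w" using conjugate_square_greater_0_vec[OF w(1)] w(2) by simp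
  moreover have "w \<bullet> (G *\<^sub>v w) = \<mu> * (w \<bullet> w)" using w by simp
  then have "0 \<le> \<mu> * (w \<bullet> w)" using psd w(1) by metis
  ultimately show ?thesis by (simp add: zero_le_mult_iff)
qed

lemma transpose_mult_self_quad:
  fixes M :: "real mat"
  assumes M: "M \<in> carrier_mat a b" and v: "v \<in> carrier_vec b"
  shows "v \<bullet> ((transpose_mat M * M) *\<^sub>v v) = (M *\<^sub>v v) \<bullet> (M *\<^sub>v v)"
  using transpose_vec_mult_scalar[OF M v, of "M *\<^sub>v v"] M v
  by (simp add: comm_scalar_prod[of v b])

lemma transpose_mult_self_eigenvalues_nonneg:
  fixes M :: "real mat"
  assumes M: "M \<in> carrier_mat a b" and b: "b > 0"
  shows "0 \<le> Min {ev. eigenvalue (transpose_mat M * M) ev}"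
    and "0 \<le> Max {ev. eigenvalue (transpose_mat M * M) ev}"
proof -
  let ?G = "transpose_mat M * M"
  have G: "?G \<in> carrier_mat b b" using M by auto
  have psd: "\<forall>v\<in>carrier_vec b. 0 \<le> v \<bullet> (?G *\<^sub>v v)"
    using transpose_mult_self_quad[OF M] conjugate_square_ge_0_vec vec_conjugate_real by metis
  have "transpose_mat ?G = ?G" using M by (simp add: transpose_mult[of _ b a M b])
  then obtain \<mu> where "eigenvalue ?G \<mu>" using sym_mat_max_eigenvalue[OF G b] by blast
  then have "{ev. eigenvalue ?G ev} \<noteq> {}" by auto
  then have "Min {ev. eigenvalue ?G ev} \<in> {ev. eigenvalue ?G ev}"
    and "Max {ev. eigenvalue ?G ev} \<in> {ev. eigenvalue ?G ev}"
    using finite_eigenvalues[OF G] by (auto intro: Max_in Min_in simp del: mem_Collect_eq)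
  then show "0 \<le> Min {ev. eigenvalue ?G ev}" "0 \<le> Max {ev. eigenvalue ?G ev}"
    using psd_eigenvalue_nonneg[OF G psd] by auto
qed

section \<open>Frobenius inner product and singular values\<close>

definition frob_inner :: "real mat \<Rightarrow> real mat \<Rightarrow> real" where
  "frob_inner X Y = (\<Sum>i<dim_row X. \<Sum>j<dim_col X. X $$ (i, j) * Y $$ (i, j))"

lemma fro_norm_sq: "(fro_norm X)\<^sup>2 = frob_inner X X"
proof -
  have "(\<Sum>i<dim_row X. \<Sum>j<dim_col X. (X $$ (i, j))\<^sup>2) = frob_inner X X"
    unfolding frob_inner_def by (simp add: power2_eq_square)
  moreover have "0 \<le> frob_inner X X" unfolding frob_inner_def by (auto intro!: sum_nonneg)
  ultimately show ?thesis unfolding fro_norm_def by simp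
qed

lemma fro_norm_eq_0_iff:
  assumes X: "X \<in> carrier_mat a b"
  shows "fro_norm X = 0 \<longleftrightarrow> X = 0\<^sub>m a b"
proof -
  have "fro_norm X = 0 \<longleftrightarrow> (\<forall>i<a. \<forall>j<b. X $$ (i, j) = 0)"
    using X unfolding fro_norm_def by (auto simp: sum_nonneg sum_nonneg_eq_0_iff)
  then show ?thesis using X by (auto intro!: eq_matI)
qed

lemma frob_inner_commute:
  assumes "X \<in> carrier_mat a b" "Y \<in> carrier_mat a b"
  shows "frob_inner X Y = frob_inner Y X"
  using assms unfolding frob_inner_def by (simp add: mult.commute)

lemma frob_inner_cols:
  assumes X: "X \<in> carrier_mat a b" and Y: "Y \<in> carrier_mat a b"
  shows "frob_inner X Y = (\<Sum>j<b. col X j \<bullet> col Y j)"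
  using X Y unfolding frob_inner_def scalar_prod_def
  by (simp add: lessThan_atLeast0) (rule sum.swap)

lemma frob_inner_mult_right:
  assumes X: "X \<in> carrier_mat a l" and N: "N \<in> carrier_mat a b" and Y: "Y \<in> carrier_mat b l"
  shows "frob_inner X (N * Y) = frob_inner (transpose_mat N * X) Y"
proof -
  have Nt: "transpose_mat N \<in> carrier_mat b a" using N by simp
  have "frob_inner X (N * Y) = (\<Sum>j<l. col X j \<bullet> col (N * Y) j)"
    using X N Y by (intro frob_inner_cols) auto
  also have "\<dots> = (\<Sum>j<l. col X j \<bullet> (N *\<^sub>v col Y j))"
    by (intro sum.cong refl) (simp only: lessThan_iff col_mult2[OF N Y])
  also have "\<dots> = (\<Sum>j<l. (transpose_mat N *\<^sub>v col X j) \<bullet> col Y j)"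
    using X N Y by (intro sum.cong refl transpose_vec_mult_scalar[symmetric]) auto
  also have "\<dots> = (\<Sum>j<l. col (transpose_mat N * X) j \<bullet> col Y j)"
    by (intro sum.cong refl) (simp only: lessThan_iff col_mult2[OF Nt X])
  also have "\<dots> = frob_inner (transpose_mat N * X) Y"
    using X Nt Y by (intro frob_inner_cols[symmetric]) auto
  finally show ?thesis .
qed

lemma fro_norm_sq_add_smult:
  assumes X: "X \<in> carrier_mat a b" and Y: "Y \<in> carrier_mat a b"
  shows "(fro_norm (X + c \<cdot>\<^sub>m Y))\<^sup>2 = (fro_norm X)\<^sup>2 + 2 * c * frob_inner X Y + c\<^sup>2 * (fro_norm Y)\<^sup>2"
  using X Y unfolding fro_norm_sq frob_inner_def
  by (simp add: sum.distrib sum_distrib_left algebra_simps power2_eq_square)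

lemma fro_norm_sq_minus_smult:
  assumes X: "X \<in> carrier_mat a b" and Y: "Y \<in> carrier_mat a b"
  shows "(fro_norm (X - c \<cdot>\<^sub>m Y))\<^sup>2 = (fro_norm X)\<^sup>2 - 2 * c * frob_inner X Y + c\<^sup>2 * (fro_norm Y)\<^sup>2"
proof -
  have "X - c \<cdot>\<^sub>m Y = X + (- c) \<cdot>\<^sub>m Y" using X Y by (intro eq_matI) auto
  then show ?thesis using fro_norm_sq_add_smult[OF X Y, of "- c"] by simp
qed

lemma frob_inner_cauchy_schwarz:
  assumes X: "X \<in> carrier_mat a b" and Y: "Y \<in> carrier_mat a b"
  shows "(frob_inner X Y)\<^sup>2 \<le> (fro_norm X)\<^sup>2 * (fro_norm Y)\<^sup>2"
proof (cases "fro_norm Y = 0")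
  case True
  then have "frob_inner X Y = 0" using fro_norm_eq_0_iff[OF Y] X by (simp add: frob_inner_def)
  then show ?thesis by simp
next
  case False
  then have pos: "(fro_norm Y)\<^sup>2 > 0" by simp
  define t where "t = frob_inner X Y / (fro_norm Y)\<^sup>2"
  have "0 \<le> (fro_norm (X - t \<cdot>\<^sub>m Y))\<^sup>2" by simp
  also have "\<dots> = (fro_norm X)\<^sup>2 - (frob_inner X Y)\<^sup>2 / (fro_norm Y)\<^sup>2"
    unfolding fro_norm_sq_minus_smult[OF X Y] using pos unfolding t_def
    by (simp add: field_simps power2_eq_square)
  finally show ?thesis using pos by (simp add: field_simps)
qed

lemma frob_inner_sym_mult_bounds:
  assumes G: "(G :: real mat) \<in> carrier_mat N N" and N: "N > 0" and sym: "transpose_mat G = G"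
    and X: "X \<in> carrier_mat N l"
  shows "frob_inner X (G * X) \<le> Max {ev. eigenvalue G ev} * (fro_norm X)\<^sup>2"
    and "Min {ev. eigenvalue G ev} * (fro_norm X)\<^sup>2 \<le> frob_inner X (G * X)"
proof -
  have "frob_inner X (G * X) = (\<Sum>j<l. col X j \<bullet> col (G * X) j)"
    using G X by (intro frob_inner_cols) auto
  also have "\<dots> = (\<Sum>j<l. col X j \<bullet> (G *\<^sub>v col X j))"
    by (intro sum.cong refl) (simp only: lessThan_iff col_mult2[OF G X])
  finally have GX: "frob_inner X (G * X) = (\<Sum>j<l. col X j \<bullet> (G *\<^sub>v col X j))" .
  have XX: "(fro_norm X)\<^sup>2 = (\<Sum>j<l. col X j \<bullet> col X j)"
    unfolding fro_norm_sq by (rule frob_inner_cols[OF X X])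
  show "frob_inner X (G * X) \<le> Max {ev. eigenvalue G ev} * (fro_norm X)\<^sup>2"
    unfolding GX XX sum_distrib_left
    by (rule sum_mono, rule sym_mat_quad_le_Max_eigenvalue[OF G N sym]) (use X in auto)
  show "Min {ev. eigenvalue G ev} * (fro_norm X)\<^sup>2 \<le> frob_inner X (G * X)"
    unfolding GX XX sum_distrib_left
    by (rule sum_mono, rule sym_mat_quad_ge_Min_eigenvalue[OF G N sym]) (use X in auto)
qed

lemma gram_eigenvalues_nonneg:
  fixes M :: "real mat"
  assumes M: "M \<in> carrier_mat a b" and a: "a > 0" and b: "b > 0"
  shows "0 \<le> Min {ev. eigenvalue (gram M) ev}" and "0 \<le> Max {ev. eigenvalue (gram M) ev}"
proof -
  have Mt: "transpose_mat M \<in> carrier_mat b a" using M by auto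
  have "gram M = transpose_mat M * M \<or> gram M = transpose_mat (transpose_mat M) * transpose_mat M"
    unfolding gram_def by auto
  then show "0 \<le> Min {ev. eigenvalue (gram M) ev}" "0 \<le> Max {ev. eigenvalue (gram M) ev}"
    using transpose_mult_self_eigenvalues_nonneg[OF M b] transpose_mult_self_eigenvalues_nonneg[OF Mt a]
    by auto
qed

lemma sigma_max_sq:
  assumes "M \<in> carrier_mat a b" "a > 0" "b > 0"
  shows "(sigma_max M)\<^sup>2 = Max {ev. eigenvalue (gram M) ev}"
  using gram_eigenvalues_nonneg[OF assms] assms unfolding sigma_max_def by simp

lemma sigma_min_sq:
  assumes "M \<in> carrier_mat a b" "a > 0" "b > 0"
  shows "(sigma_min M)\<^sup>2 = Min {ev. eigenvalue (gram M) ev}"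
  using gram_eigenvalues_nonneg[OF assms] assms unfolding sigma_min_def by simp

lemma fro_norm_mult_le_Max_eigenvalue:
  fixes N :: "real mat"
  assumes N: "N \<in> carrier_mat a b" and b: "b > 0" and W: "W \<in> carrier_mat b l"
  shows "(fro_norm (N * W))\<^sup>2 \<le> Max {ev. eigenvalue (transpose_mat N * N) ev} * (fro_norm W)\<^sup>2"
proof -
  let ?G = "transpose_mat N * N"
  have G: "?G \<in> carrier_mat b b" and sym: "transpose_mat ?G = ?G"
    using N by (auto simp: transpose_mult[of _ b a N b])
  have "(fro_norm (N * W))\<^sup>2 = frob_inner (transpose_mat N * (N * W)) W"
    unfolding fro_norm_sq using N W by (intro frob_inner_mult_right) auto
  also have "\<dots> = frob_inner W (?G * W)"
    using N W by (subst frob_inner_commute[of _ b l]) auto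
  also have "\<dots> \<le> Max {ev. eigenvalue ?G ev} * (fro_norm W)\<^sup>2"
    by (rule frob_inner_sym_mult_bounds(1)[OF G b sym W])
  finally show ?thesis .
qed

text \<open>Cauchy--Schwarz applied to \<open>\<parallel>N W\<parallel>\<^sup>2 = \<langle>N\<^sup>T (N W), W\<rangle>\<close>.\<close>

lemma fro_norm_mult_le_of_transpose:
  fixes N :: "real mat"
  assumes N: "N \<in> carrier_mat a b" and W: "W \<in> carrier_mat b l" and c: "c \<ge> 0"
    and bound: "\<forall>U\<in>carrier_mat a l. (fro_norm (transpose_mat N * U))\<^sup>2 \<le> c * (fro_norm U)\<^sup>2"
  shows "(fro_norm (N * W))\<^sup>2 \<le> c * (fro_norm W)\<^sup>2"
proof -
  define u where "u = N * W"
  have u: "u \<in> carrier_mat a l" unfolding u_def using N W by auto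
  have "(fro_norm u)\<^sup>2 = frob_inner (transpose_mat N * u) W"
    unfolding fro_norm_sq by (subst (2) u_def, rule frob_inner_mult_right[OF u N W])
  then have "((fro_norm u)\<^sup>2)\<^sup>2 \<le> (fro_norm (transpose_mat N * u))\<^sup>2 * (fro_norm W)\<^sup>2"
    using frob_inner_cauchy_schwarz[of "transpose_mat N * u" b l W] N u W by auto
  also have "\<dots> \<le> c * (fro_norm u)\<^sup>2 * (fro_norm W)\<^sup>2"
    using bound u by (intro mult_right_mono) auto
  finally have sq: "(fro_norm u)\<^sup>2 * (fro_norm u)\<^sup>2 \<le> (fro_norm u)\<^sup>2 * (c * (fro_norm W)\<^sup>2)"
    by (simp only: power2_eq_square[of "(fro_norm u)\<^sup>2"] mult_ac)
  have "(fro_norm u)\<^sup>2 \<le> c * (fro_norm W)\<^sup>2"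
    using mult_left_le_imp_le[OF sq] c by (cases "fro_norm u = 0") auto
  then show ?thesis unfolding u_def .
qed

lemma sigma_max_mult_bound:
  fixes N W :: "real mat"
  assumes N: "N \<in> carrier_mat a b" and W: "W \<in> carrier_mat b l"
  shows "(fro_norm (N * W))\<^sup>2 \<le> (sigma_max N)\<^sup>2 * (fro_norm W)\<^sup>2"
proof (cases "a = 0 \<or> b = 0")
  case True
  then have "fro_norm (N * W) = 0"
    using N W unfolding fro_norm_def by (auto simp: scalar_prod_def)
  then show ?thesis by simp
next
  case False
  then have a: "a > 0" and b: "b > 0" by auto
  show ?thesis
  proof (cases "b \<le> a")
    case True
    then show ?thesis
      using fro_norm_mult_le_Max_eigenvalue[OF N b W] sigma_max_sq[OF N a b] N
      by (simp add: gram_def)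
  next
    case False
    have Nt: "transpose_mat N \<in> carrier_mat b a" using N by auto
    have "gram N = transpose_mat (transpose_mat N) * transpose_mat N"
      using False N by (simp add: gram_def)
    then have "\<forall>U\<in>carrier_mat a l. (fro_norm (transpose_mat N * U))\<^sup>2 \<le> (sigma_max N)\<^sup>2 * (fro_norm U)\<^sup>2"
      using fro_norm_mult_le_Max_eigenvalue[OF Nt a] sigma_max_sq[OF N a b] by simp
    then show ?thesis by (intro fro_norm_mult_le_of_transpose[OF N W]) auto
  qed
qed

lemma Min_eigenvalue_mult_frob_inner_le:
  assumes G: "(G :: real mat) \<in> carrier_mat N N" and N: "N > 0" and sym: "transpose_mat G = G"
    and nonneg: "0 \<le> Min {ev. eigenvalue G ev}" and D: "D \<in> carrier_mat N l"
  shows "Min {ev. eigenvalue G ev} * frob_inner D (G * D) \<le> (fro_norm (G * D))\<^sup>2"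
proof -
  define \<mu> where "\<mu> = Min {ev. eigenvalue G ev}"
  define E where "E = frob_inner D (G * D)"
  have GD: "G * D \<in> carrier_mat N l" using G D by auto
  have lower: "\<mu> * (fro_norm D)\<^sup>2 \<le> E"
    unfolding \<mu>_def E_def by (rule frob_inner_sym_mult_bounds(2)[OF G N sym D])
  have cs: "E\<^sup>2 \<le> (fro_norm D)\<^sup>2 * (fro_norm (G * D))\<^sup>2"
    unfolding E_def by (rule frob_inner_cauchy_schwarz[OF D GD])
  show ?thesis
  proof (cases "\<mu> = 0 \<or> E \<le> 0")
    case True
    then show ?thesis using nonneg unfolding \<mu>_def[symmetric] E_def[symmetric]
      by (auto simp: mult_nonneg_nonpos order_trans[OF _ zero_le_power2])
  next
    case False
    then have "\<mu> > 0" "E > 0" using nonneg unfolding \<mu>_def by auto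
    have "E * (\<mu> * E) = \<mu> * E\<^sup>2" by (simp add: power2_eq_square)
    also have "\<dots> \<le> \<mu> * ((fro_norm D)\<^sup>2 * (fro_norm (G * D))\<^sup>2)"
      using cs \<open>\<mu> > 0\<close> by (simp add: mult_left_mono)
    also have "\<dots> = (\<mu> * (fro_norm D)\<^sup>2) * (fro_norm (G * D))\<^sup>2" by (simp add: mult_ac)
    also have "\<dots> \<le> E * (fro_norm (G * D))\<^sup>2" using lower by (rule mult_right_mono) simp
    finally show ?thesis using \<open>E > 0\<close> unfolding \<mu>_def[symmetric] E_def[symmetric]
      by (simp add: mult_le_cancel_left_pos)
  qed
qed

lemma sigma_min_transpose_mult_bound:
  fixes M D :: "real mat"
  assumes M: "M \<in> carrier_mat a b" and a: "a > 0" and b: "b > 0" and D: "D \<in> carrier_mat b l"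
  shows "(sigma_min M)\<^sup>2 * (fro_norm (M * D))\<^sup>2 \<le> (fro_norm (transpose_mat M * (M * D)))\<^sup>2"
proof (cases "b \<le> a")
  case True
  let ?G = "transpose_mat M * M"
  have G: "?G \<in> carrier_mat b b" and sym: "transpose_mat ?G = ?G"
    using M by (auto simp: transpose_mult[of _ b a M b])
  have "(fro_norm (M * D))\<^sup>2 = frob_inner D (?G * D)"
    unfolding fro_norm_sq using M D
    by (subst frob_inner_mult_right, auto intro!: frob_inner_commute[of _ b l])
  moreover have "transpose_mat M * (M * D) = ?G * D" using M D by simp
  moreover have "gram M = ?G" using True M by (simp add: gram_def)
  ultimately show ?thesis
    using Min_eigenvalue_mult_frob_inner_le[OF G b sym _ D] gram_eigenvalues_nonneg(1)[OF M a b]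
      sigma_min_sq[OF M a b] by simp
next
  case False
  let ?G = "M * transpose_mat M"
  have G: "?G \<in> carrier_mat a a" and sym: "transpose_mat ?G = ?G"
    using M by (auto simp: transpose_mult[of _ a b _ a])
  have u: "M * D \<in> carrier_mat a l" using M D by auto
  have "(fro_norm (transpose_mat M * (M * D)))\<^sup>2 = frob_inner (M * D) (?G * (M * D))"
    unfolding fro_norm_sq using M u
    by (subst frob_inner_mult_right[of _ a l M b, symmetric]) auto
  moreover have "gram M = ?G" using False M by (simp add: gram_def)
  ultimately show ?thesis
    using frob_inner_sym_mult_bounds(2)[OF G a sym u] sigma_min_sq[OF M a b] by simp
qed

lemma fro_norm_mult_minus_le:
  fixes M :: "real mat"
  assumes M: "M \<in> carrier_mat a b" and X: "X \<in> carrier_mat b l" and Y: "Y \<in> carrier_mat b l"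
  shows "(fro_norm (M * X - M * Y))\<^sup>2 \<le> (sigma_max M)\<^sup>2 * (fro_norm (X - Y))\<^sup>2"
  using sigma_max_mult_bound[OF M minus_carrier_mat[OF Y, of X]] M X Y by (simp add: mult_minus_distrib_mat)

section \<open>Least squares and the pseudoinverse\<close>

lemma fro_norm_minus_eq_0_iff:
  assumes X: "X \<in> carrier_mat a b" and Y: "Y \<in> carrier_mat a b"
  shows "fro_norm (X - Y) = 0 \<longleftrightarrow> X = Y"
proof
  assume "fro_norm (X - Y) = 0"
  then have eq: "X - Y = 0\<^sub>m a b" using fro_norm_eq_0_iff[of "X - Y" a b] Y by (metis minus_carrier_mat)
  have "X $$ (i, j) - Y $$ (i, j) = 0" if "i < a" "j < b" for i j
    using arg_cong[OF eq, of "\<lambda>Z. Z $$ (i, j)"] X Y that by simp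
  then show "X = Y" using X Y by (intro eq_matI) auto
qed (use fro_norm_eq_0_iff[of "X - X" a b] X in auto)

lemma least_squares_normal_equation:
  fixes M B Xdd :: "real mat"
  assumes M: "M \<in> carrier_mat a b" and B: "B \<in> carrier_mat a l" and Xdd: "Xdd \<in> carrier_mat b l"
    and min: "\<forall>Y\<in>carrier_mat b l. (fro_norm (M * Xdd - B))\<^sup>2 \<le> (fro_norm (M * Y - B))\<^sup>2"
  shows "transpose_mat M * (M * Xdd - B) = 0\<^sub>m b l"
proof -
  define R where "R = M * Xdd - B"
  define D where "D = transpose_mat M * R"
  have R: "R \<in> carrier_mat a l" unfolding R_def using M Xdd B by auto
  have D: "D \<in> carrier_mat b l" unfolding D_def using M R by auto
  have MD: "M * D \<in> carrier_mat a l" using M D by auto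
  have "2 * t * (- (fro_norm D)\<^sup>2) + t\<^sup>2 * (- (fro_norm (M * D))\<^sup>2) \<le> 0" for t
  proof -
    have Y: "Xdd + t \<cdot>\<^sub>m D \<in> carrier_mat b l" using Xdd D by auto
    have "M * (Xdd + t \<cdot>\<^sub>m D) = M * Xdd + t \<cdot>\<^sub>m (M * D)"
      using M Xdd D by (simp add: mult_add_distrib_mat mult_smult_distrib)
    then have "M * (Xdd + t \<cdot>\<^sub>m D) - B = R + t \<cdot>\<^sub>m (M * D)"
      unfolding R_def using M Xdd B D by (intro eq_matI) auto
    then have "(fro_norm R)\<^sup>2 \<le> (fro_norm (R + t \<cdot>\<^sub>m (M * D)))\<^sup>2"
      using min Y unfolding R_def by metis
    also have "\<dots> = (fro_norm R)\<^sup>2 + 2 * t * frob_inner R (M * D) + t\<^sup>2 * (fro_norm (M * D))\<^sup>2"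
      by (rule fro_norm_sq_add_smult[OF R MD])
    also have "frob_inner R (M * D) = (fro_norm D)\<^sup>2"
      unfolding fro_norm_sq D_def by (rule frob_inner_mult_right[OF R M D[unfolded D_def]])
    finally show ?thesis by simp
  qed
  then have "- (fro_norm D)\<^sup>2 = 0" by (rule quadratic_nonpos_imp_linear_coeff_zero)
  then show ?thesis using fro_norm_eq_0_iff[OF D] unfolding D_def R_def by simp
qed

lemma transpose_mult_self_invertible:
  fixes M :: "real mat"
  assumes M: "M \<in> carrier_mat a b" and inj: "\<forall>v\<in>carrier_vec b. M *\<^sub>v v = 0\<^sub>v a \<longrightarrow> v = 0\<^sub>v b"
  obtains Gi where "Gi \<in> carrier_mat b b" "Gi * (transpose_mat M * M) = 1\<^sub>m b"
    "transpose_mat Gi = Gi"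
proof -
  define G where "G = transpose_mat M * M"
  have G: "G \<in> carrier_mat b b" unfolding G_def using M by auto
  have sym: "transpose_mat G = G" unfolding G_def using M by (simp add: transpose_mult[of _ b a M b])
  have "det G \<noteq> 0"
  proof
    assume "det G = 0"
    then obtain v where v: "v \<in> carrier_vec b" "v \<noteq> 0\<^sub>v b" "G *\<^sub>v v = 0\<^sub>v b"
      using det_0_iff_vec_prod_zero_field[OF G] by blast
    have "(M *\<^sub>v v) \<bullet> (M *\<^sub>v v) = 0"
      using transpose_mult_self_quad[OF M v(1)] v unfolding G_def by simp
    then have "M *\<^sub>v v = 0\<^sub>v a" using conjugate_square_eq_0_vec[of "M *\<^sub>v v" a] M v(1) by simp
    then show False using inj v by auto
  qed
  then obtain Gi where Gi: "Gi \<in> carrier_mat b b" and GGi: "G * Gi = 1\<^sub>m b" and GiG: "Gi * G = 1\<^sub>m b"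
    using det_non_zero_imp_unit[OF G] unfolding Units_def ring_mat_def by auto
  have "transpose_mat Gi = transpose_mat Gi * (G * Gi)" using GGi Gi by simp
  also have "\<dots> = transpose_mat (G * Gi) * Gi"
    using Gi G by (simp add: transpose_mult[OF G Gi] sym)
  also have "\<dots> = Gi" using GGi Gi by simp
  finally show ?thesis using that Gi GiG unfolding G_def by blast
qed

lemma pinv_left_inverse:
  fixes M :: "real mat"
  assumes M: "M \<in> carrier_mat a b" and inj: "\<forall>v\<in>carrier_vec b. M *\<^sub>v v = 0\<^sub>v a \<longrightarrow> v = 0\<^sub>v b"
  shows "pinv M \<in> carrier_mat b a" and "pinv M * M = 1\<^sub>m b"
proof -
  obtain Gi where Gi: "Gi \<in> carrier_mat b b" and GiG: "Gi * (transpose_mat M * M) = 1\<^sub>m b"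
    and sym: "transpose_mat Gi = Gi"
    using transpose_mult_self_invertible[OF M inj] .
  have Mt: "transpose_mat M \<in> carrier_mat b a" using M by auto
  define P where "P = Gi * transpose_mat M"
  have P: "P \<in> carrier_mat b a" unfolding P_def using Gi Mt by auto
  have PM: "P * M = 1\<^sub>m b" unfolding P_def using Gi Mt M GiG by simp
  have penrose: "P \<in> carrier_mat (dim_col M) (dim_row M) \<and> M * P * M = M \<and> P * M * P = P \<and>
      transpose_mat (M * P) = M * P \<and> transpose_mat (P * M) = P * M"
  proof -
    have "transpose_mat (M * P) = M * transpose_mat Gi * transpose_mat M"
      unfolding P_def using M Gi Mt
      by (simp add: transpose_mult[of M a b "Gi * transpose_mat M" a] transpose_mult[OF Gi Mt])
    then have "transpose_mat (M * P) = M * P" unfolding sym P_def using M Gi Mt by simp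
    then show ?thesis using P PM M by simp
  qed
  have "X = P" if "X \<in> carrier_mat (dim_col M) (dim_row M) \<and> M * X * M = M \<and> X * M * X = X \<and>
      transpose_mat (M * X) = M * X \<and> transpose_mat (X * M) = X * M" for X
  proof -
    have X: "X \<in> carrier_mat b a" using that M by auto
    have MXM: "M * X * M = M" and sym_MX: "transpose_mat (M * X) = M * X" using that by auto
    have "transpose_mat M = transpose_mat (M * X * M)" unfolding MXM ..
    also have "\<dots> = transpose_mat M * transpose_mat (M * X)"
      using M X by (intro transpose_mult) auto
    also have "\<dots> = transpose_mat M * (M * X)" unfolding sym_MX ..
    also have "\<dots> = (transpose_mat M * M) * X" using assoc_mult_mat[OF Mt M X] by simp
    finally have "transpose_mat M = (transpose_mat M * M) * X" .
    then have "P = Gi * ((transpose_mat M * M) * X)" unfolding P_def by (rule arg_cong)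
    also have "\<dots> = (Gi * (transpose_mat M * M)) * X"
      using assoc_mult_mat[OF Gi _ X, of "transpose_mat M * M"] M by auto
    also have "\<dots> = X" unfolding GiG using X by simp
    finally show "X = P" ..
  qed
  then have "pinv M = P" unfolding pinv_def using penrose by (rule the_equality[rotated])
  then show "pinv M \<in> carrier_mat b a" "pinv M * M = 1\<^sub>m b" using P PM by auto
qed

lemma unique_solution_imp_inj:
  fixes M :: "real mat"
  assumes M: "M \<in> carrier_mat a b" and X0: "X0 \<in> carrier_mat b l" and l: "l > 0"
    and uniq: "\<forall>X\<in>carrier_mat b l. M * X = M * X0 \<longrightarrow> X = X0"
  shows "\<forall>v\<in>carrier_vec b. M *\<^sub>v v = 0\<^sub>v a \<longrightarrow> v = 0\<^sub>v b"
proof (intro ballI impI)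
  fix v assume v: "v \<in> carrier_vec b" and Mv: "M *\<^sub>v v = 0\<^sub>v a"
  define V where "V = mat b l (\<lambda>(i, j). if j = 0 then v $ i else 0)"
  have V: "V \<in> carrier_mat b l" unfolding V_def by simp
  have "(M * V) $$ (i, j) = 0" if i: "i < a" and j: "j < l" for i j
  proof -
    have "col V j = (if j = 0 then v else 0\<^sub>v b)"
      using v j unfolding V_def by (intro eq_vecI) auto
    moreover have "row M i \<bullet> v = 0"
      using arg_cong[OF Mv, of "\<lambda>u. u $ i"] M i by simp
    ultimately show ?thesis using M V i j v by (simp add: scalar_prod_right_zero[of _ b])
  qed
  then have "M * V = 0\<^sub>m a l" using M V by (intro eq_matI) auto
  then have "M * (X0 + V) = M * X0" using M X0 V by (simp add: mult_add_distrib_mat)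
  then have eq: "X0 + V = X0" using uniq add_carrier_mat[OF V] by blast
  have "V $$ (i, 0) = 0" if "i < b" for i
    using arg_cong[OF eq, of "\<lambda>Z. Z $$ (i, 0)"] X0 V l that by simp
  then show "v = 0\<^sub>v b" using v l unfolding V_def by (intro eq_vecI) auto
qed

lemma fro_norm_minus_le_pinv:
  fixes M :: "real mat"
  assumes M: "M \<in> carrier_mat a b" and inj: "\<forall>v\<in>carrier_vec b. M *\<^sub>v v = 0\<^sub>v a \<longrightarrow> v = 0\<^sub>v b"
    and X: "X \<in> carrier_mat b l" and Y: "Y \<in> carrier_mat b l"
  shows "(fro_norm (X - Y))\<^sup>2 \<le> (sigma_max (pinv M))\<^sup>2 * (fro_norm (M * X - M * Y))\<^sup>2"
proof -
  define D where "D = X - Y"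
  have D: "D \<in> carrier_mat b l" unfolding D_def using X Y by auto
  have "D = (pinv M * M) * D" unfolding pinv_left_inverse(2)[OF M inj] by (rule left_mult_one_mat[OF D, symmetric])
  also have "\<dots> = pinv M * (M * D)" using pinv_left_inverse(1)[OF M inj] M D by simp
  finally have "(fro_norm D)\<^sup>2 = (fro_norm (pinv M * (M * D)))\<^sup>2" by simp
  also have "\<dots> \<le> (sigma_max (pinv M))\<^sup>2 * (fro_norm (M * D))\<^sup>2"
    using pinv_left_inverse(1)[OF M inj] M D by (intro sigma_max_mult_bound) auto
  also have "M * D = M * X - M * Y" unfolding D_def using M X Y by (simp add: mult_minus_distrib_mat)
  finally show ?thesis unfolding D_def .
qed

lemma unique_solution_residual_pos:
  fixes M :: "real mat"
  assumes M: "M \<in> carrier_mat a b" and X0: "X0 \<in> carrier_mat b l" and b: "b > 0" and l: "l > 0"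
    and uniq: "\<forall>X\<in>carrier_mat b l. M * X = M * X0 \<longrightarrow> X = X0"
  obtains X where "X \<in> carrier_mat b l" "0 < (fro_norm (M * X - M * X0))\<^sup>2"
proof -
  define X where "X = X0 + mat b l (\<lambda>_. 1)"
  have X: "X \<in> carrier_mat b l" unfolding X_def using X0 by auto
  have "X $$ (0, 0) \<noteq> X0 $$ (0, 0)" unfolding X_def using X0 b l by simp
  then have "M * X \<noteq> M * X0" using uniq X by auto
  then have "fro_norm (M * X - M * X0) \<noteq> 0"
    using fro_norm_minus_eq_0_iff[of "M * X" a l "M * X0"] M X X0 by auto
  then show ?thesis using that X by simp
qed

section \<open>Block-circulant matrices\<close>

lemma mod_add_sub_eq_0_iff:
  assumes "x < p" "y < p"
  shows "(x + p - y) mod p = 0 \<longleftrightarrow> x = (y::nat)"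
  using assms by (cases "y \<le> x") (auto simp: mod_if)

lemma mod_neg_mod_add_sub:
  assumes "x < p" "y < p"
  shows "(p - (x + p - y) mod p) mod p = (y + p - (x::nat)) mod p"
  using assms by (cases "y \<le> x") (auto simp: mod_if)

lemma mult_add_less_mult:
  assumes "q < p" "t < (n::nat)"
  shows "q * n + t < n * p"
proof -
  have "q * n + t < (q + 1) * n" using assms by simp
  also have "\<dots> \<le> p * n" using assms by (intro mult_right_mono) auto
  finally show ?thesis by (simp add: mult.commute)
qed

lemma mult_add_eq_less_iff:
  assumes "x < n" "t < (n::nat)"
  shows "q * n + x = t \<longleftrightarrow> q = 0 \<and> x = t"
  using assms by (cases q) auto

lemma eq_mult_add_iff:
  assumes "t < (n::nat)"
  shows "r = d * n + t \<longleftrightarrow> r div n = d \<and> r mod n = t"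
  using assms by (metis div_mult_mod_eq mult.commute add.commute div_mult_self1 mod_mult_self2
      div_less mod_less add_cancel_left_left less_nat_zero_code)

lemma bcirc_carrier:
  assumes A: "A \<in> carrier_mat (m * p) n" and p: "p > 0"
  shows "bcirc p A \<in> carrier_mat (m * p) (n * p)"
  using A p unfolding bcirc_def Let_def by simp

lemma bcirc_index:
  assumes A: "A \<in> carrier_mat (m * p) n" and p: "p > 0" and r: "r < m * p" and s: "s < n * p"
  shows "bcirc p A $$ (r, s) = A $$ (((r div m + p - s div n) mod p) * m + r mod m, s mod n)"
  using A p r s unfolding bcirc_def Let_def by simp

definition sel_mat :: "nat \<Rightarrow> nat \<Rightarrow> (nat \<Rightarrow> nat) \<Rightarrow> real mat" where
  "sel_mat N K f = mat N K (\<lambda>(r, c). if r = f c then 1 else 0)"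

lemma sel_mat_carrier [simp]: "sel_mat N K f \<in> carrier_mat N K"
  unfolding sel_mat_def by simp

lemma mult_sel_mat_index:
  assumes X: "X \<in> carrier_mat a N" and r: "r < a" and c: "c < K" and f: "f c < N"
  shows "(X * sel_mat N K f) $$ (r, c) = X $$ (r, f c)"
proof -
  have "(X * sel_mat N K f) $$ (r, c) = (\<Sum>s<N. X $$ (r, s) * (if s = f c then 1 else 0))"
    using X r c unfolding sel_mat_def by (simp add: scalar_prod_def lessThan_atLeast0)
  also have "\<dots> = X $$ (r, f c)" using f by (simp add: if_distrib sum.delta' cong: if_cong)
  finally show ?thesis .
qed

lemma transpose_sel_mat_mult_index:
  assumes V: "V \<in> carrier_mat N l" and c: "c < K" and j: "j < l" and f: "f c < N"
  shows "(transpose_mat (sel_mat N K f) * V) $$ (c, j) = V $$ (f c, j)"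
proof -
  have "(transpose_mat (sel_mat N K f) * V) $$ (c, j) = (\<Sum>s<N. (if s = f c then 1 else 0) * V $$ (s, j))"
    using V c j unfolding sel_mat_def by (simp add: scalar_prod_def lessThan_atLeast0)
  also have "\<dots> = (\<Sum>s<N. if s = f c then V $$ (s, j) else 0)" by (intro sum.cong) auto
  also have "\<dots> = V $$ (f c, j)" using f by simp
  finally show ?thesis .
qed

lemma fro_norm_transpose_sel_mat_mult:
  assumes f: "bij_betw f {..<K} S" and S: "S \<subseteq> {..<N}" and V: "V \<in> carrier_mat N l"
  shows "(fro_norm (transpose_mat (sel_mat N K f) * V))\<^sup>2 = (\<Sum>s\<in>S. \<Sum>j<l. (V $$ (s, j))\<^sup>2)"
proof -
  define Y where "Y = transpose_mat (sel_mat N K f) * V"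
  have Y: "Y \<in> carrier_mat K l" unfolding Y_def using V by (intro mult_carrier_mat[of _ K N]) auto
  have fc: "f c < N" if "c < K" for c using f S that by (auto dest: bij_betwE)
  have "(fro_norm Y)\<^sup>2 = (\<Sum>c<K. \<Sum>j<l. (Y $$ (c, j))\<^sup>2)"
    unfolding fro_norm_def using Y by (simp add: sum_nonneg)
  also have "\<dots> = (\<Sum>c<K. \<Sum>j<l. (V $$ (f c, j))\<^sup>2)"
    unfolding Y_def using V fc by (intro sum.cong refl) (simp add: transpose_sel_mat_mult_index)
  also have "\<dots> = (\<Sum>s\<in>S. \<Sum>j<l. (V $$ (s, j))\<^sup>2)"
    by (rule sum.reindex_bij_betw[OF f])
  finally show ?thesis unfolding Y_def .
qed

text \<open>Position in the unfolding of the \<open>(c mod |\<tau>|)\<close>-th element of \<open>\<tau>\<close> within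
  frontal slice \<open>c div |\<tau>|\<close>.\<close>

definition lat_index :: "nat \<Rightarrow> nat set \<Rightarrow> nat \<Rightarrow> nat" where
  "lat_index n \<tau> c = (c div card \<tau>) * n + sorted_list_of_set \<tau> ! (c mod card \<tau>)"

lemma sorted_list_of_set_nth_mem:
  fixes \<tau> :: "nat set"
  assumes "\<tau> \<subseteq> {..<n}" "i < card \<tau>"
  shows "sorted_list_of_set \<tau> ! i \<in> \<tau>"
proof -
  have fin: "finite \<tau>" using finite_subset[OF assms(1)] by simp
  then have "sorted_list_of_set \<tau> ! i \<in> set (sorted_list_of_set \<tau>)" using assms(2) by (intro nth_mem) simp
  then show ?thesis using fin by simp
qed

lemma lat_index_div_mod:
  assumes \<tau>: "\<tau> \<subseteq> {..<n}" and c: "c < card \<tau> * p"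
  shows "lat_index n \<tau> c < n * p" and "lat_index n \<tau> c div n = c div card \<tau>"
    and "lat_index n \<tau> c mod n = sorted_list_of_set \<tau> ! (c mod card \<tau>)"
    and "lat_index n \<tau> c mod n \<in> \<tau>"
proof -
  have k: "card \<tau> > 0" using c by (cases "card \<tau>") auto
  have t: "sorted_list_of_set \<tau> ! (c mod card \<tau>) \<in> \<tau>"
    using sorted_list_of_set_nth_mem[OF \<tau>] k by simp
  then have tn: "sorted_list_of_set \<tau> ! (c mod card \<tau>) < n" using \<tau> by auto
  have "c div card \<tau> < p" using c by (simp add: less_mult_imp_div_less mult.commute)
  then show "lat_index n \<tau> c < n * p" unfolding lat_index_def by (rule mult_add_less_mult[OF _ tn])
  show "lat_index n \<tau> c div n = c div card \<tau>"
    and "lat_index n \<tau> c mod n = sorted_list_of_set \<tau> ! (c mod card \<tau>)"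
    unfolding lat_index_def using tn by simp_all
  then show "lat_index n \<tau> c mod n \<in> \<tau>" using t by simp
qed

lemma bij_betw_lat_index:
  assumes \<tau>: "\<tau> \<subseteq> {..<n}"
  shows "bij_betw (lat_index n \<tau>) {..<card \<tau> * p} {s \<in> {..<n * p}. s mod n \<in> \<tau>}"
proof -
  define k where "k = card \<tau>"
  define xs where "xs = sorted_list_of_set \<tau>"
  have fin: "finite \<tau>" using finite_subset[OF \<tau>] by simp
  have xs: "distinct xs" "length xs = k" "set xs = \<tau>" unfolding xs_def k_def using fin by auto
  have "inj_on (lat_index n \<tau>) {..<k * p}"
  proof (rule inj_onI)
    fix c c' assume c: "c \<in> {..<k * p}" and c': "c' \<in> {..<k * p}"
      and eq: "lat_index n \<tau> c = lat_index n \<tau> c'"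
    have "c div k = c' div k" and "xs ! (c mod k) = xs ! (c' mod k)"
      using lat_index_div_mod[OF \<tau>, of c p] lat_index_div_mod[OF \<tau>, of c' p] c c' eq unfolding k_def xs_def by auto
    moreover have "k > 0" using c by (cases k) auto
    ultimately have "c div k = c' div k" "c mod k = c' mod k"
      using nth_eq_iff_index_eq[OF xs(1)] xs(2) by auto
    then show "c = c'" by (metis div_mult_mod_eq)
  qed
  moreover have "{s \<in> {..<n * p}. s mod n \<in> \<tau>} \<subseteq> lat_index n \<tau> ` {..<k * p}"
  proof
    fix s assume "s \<in> {s \<in> {..<n * p}. s mod n \<in> \<tau>}"
    then have s: "s < n * p" and sm: "s mod n \<in> \<tau>" by auto
    obtain i where i: "i < k" and xi: "xs ! i = s mod n"
      using sm xs by (metis in_set_conv_nth)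
    have "s div n < p" using s by (simp add: less_mult_imp_div_less mult.commute)
    then have "(s div n) * k + i < k * p" by (rule mult_add_less_mult[OF _ i])
    moreover have "lat_index n \<tau> ((s div n) * k + i) = s"
      using i xi unfolding lat_index_def xs_def k_def by simp
    ultimately show "s \<in> lat_index n \<tau> ` {..<k * p}" by (metis image_eqI lessThan_iff)
  qed
  moreover have "lat_index n \<tau> ` {..<k * p} \<subseteq> {s \<in> {..<n * p}. s mod n \<in> \<tau>}"
    using lat_index_div_mod[OF \<tau>] unfolding k_def by auto
  ultimately show ?thesis unfolding bij_betw_def k_def by blast
qed

lemma Etau_eq_sel_mat: "Etau n p \<tau> = sel_mat (n * p) (card \<tau>) (\<lambda>c. sorted_list_of_set \<tau> ! c)"
  unfolding Etau_def sel_mat_def ..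

lemma bcirc_Etau:
  assumes \<tau>: "\<tau> \<subseteq> {..<n}" and p: "p > 0"
  shows "bcirc p (Etau n p \<tau>) = sel_mat (n * p) (card \<tau> * p) (lat_index n \<tau>)"
proof (rule eq_matI)
  have E: "Etau n p \<tau> \<in> carrier_mat (n * p) (card \<tau>)" unfolding Etau_def by simp
  show "dim_row (bcirc p (Etau n p \<tau>)) = dim_row (sel_mat (n * p) (card \<tau> * p) (lat_index n \<tau>))"
    and "dim_col (bcirc p (Etau n p \<tau>)) = dim_col (sel_mat (n * p) (card \<tau> * p) (lat_index n \<tau>))"
    using bcirc_carrier[OF E p] by (auto simp: sel_mat_def)
  fix r c assume "r < dim_row (sel_mat (n * p) (card \<tau> * p) (lat_index n \<tau>))"
    and "c < dim_col (sel_mat (n * p) (card \<tau> * p) (lat_index n \<tau>))"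
  then have r: "r < n * p" and c: "c < card \<tau> * p" by (auto simp: sel_mat_def)
  define k where "k = card \<tau>"
  define t where "t = sorted_list_of_set \<tau> ! (c mod k)"
  have k: "k > 0" using c unfolding k_def by (cases "card \<tau>") auto
  have t: "t < n" using lat_index_div_mod(3,4)[OF \<tau> c] unfolding t_def k_def by (metis \<tau> lessThan_iff subsetD)
  have n: "n > 0" using t by simp
  have rq: "r div n < p" and cq: "c div k < p"
    using r c unfolding k_def by (simp_all add: less_mult_imp_div_less mult.commute)
  define R where "R = ((r div n + p - c div k) mod p) * n + r mod n"
  have "R < n * p" unfolding R_def using n p by (intro mult_add_less_mult) auto
  moreover have "R = t \<longleftrightarrow> r = lat_index n \<tau> c"
  proof -
    have "R = t \<longleftrightarrow> (r div n + p - c div k) mod p = 0 \<and> r mod n = t"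
      unfolding R_def using n t by (intro mult_add_eq_less_iff) auto
    also have "\<dots> \<longleftrightarrow> r div n = c div k \<and> r mod n = t" using mod_add_sub_eq_0_iff[OF rq cq] by simp
    also have "\<dots> \<longleftrightarrow> r = lat_index n \<tau> c"
      unfolding lat_index_def t_def k_def using eq_mult_add_iff[OF t[unfolded t_def k_def]] by simp
    finally show ?thesis .
  qed
  ultimately show "bcirc p (Etau n p \<tau>) $$ (r, c) = sel_mat (n * p) (card \<tau> * p) (lat_index n \<tau>) $$ (r, c)"
    using bcirc_index[OF E p r c] r c k unfolding R_def t_def k_def Etau_def sel_mat_def by simp
qed

lemma bcirc_lat_slices:
  assumes A: "A \<in> carrier_mat (m * p) n" and \<tau>: "\<tau> \<subseteq> {..<n}" and p: "p > 0"
  shows "bcirc p (lat_slices n p A \<tau>) = bcirc p A * bcirc p (Etau n p \<tau>)"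
proof -
  define k where "k = card \<tau>"
  define M where "M = bcirc p A"
  have M: "M \<in> carrier_mat (m * p) (n * p)" unfolding M_def by (rule bcirc_carrier[OF A p])
  have L: "M * Etau n p \<tau> \<in> carrier_mat (m * p) k" using M unfolding Etau_def k_def by auto
  have "bcirc p (M * Etau n p \<tau>) = M * sel_mat (n * p) (k * p) (lat_index n \<tau>)"
  proof (rule eq_matI)
    fix r c assume "r < dim_row (M * sel_mat (n * p) (k * p) (lat_index n \<tau>))"
      and "c < dim_col (M * sel_mat (n * p) (k * p) (lat_index n \<tau>))"
    then have r: "r < m * p" and c: "c < k * p" using M by (auto simp: sel_mat_def)
    define t where "t = sorted_list_of_set \<tau> ! (c mod k)"
    have k: "k > 0" using c by (cases k) auto
    have m: "m > 0" using r by (cases m) auto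
    have t: "t < n" using lat_index_div_mod(3,4)[OF \<tau>, of c p] c \<tau> unfolding t_def k_def by auto
    have tnp: "t < n * p" using mult_add_less_mult[of 0 p t n] p t by simp
    have sc: "lat_index n \<tau> c < n * p" "lat_index n \<tau> c div n = c div k" "lat_index n \<tau> c mod n = t"
      using lat_index_div_mod[OF \<tau>, of c p] c unfolding k_def t_def by auto
    define R where "R = ((r div m + p - c div k) mod p) * m + r mod m"
    have R: "R < m * p" unfolding R_def using m p by (intro mult_add_less_mult) auto
    have "(M * Etau n p \<tau>) $$ (R, c mod k) = M $$ (R, t)"
      unfolding Etau_eq_sel_mat t_def using M R k tnp k_def by (intro mult_sel_mat_index) (auto simp: t_def)
    also have "\<dots> = A $$ (((r div m + p - c div k) mod p) * m + r mod m, t)"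
      unfolding M_def bcirc_index[OF A p R tnp] using t m
      by (simp add: R_def mod_less[of "(r div m + p - c div k) mod p" p])
    also have "\<dots> = M $$ (r, lat_index n \<tau> c)" unfolding M_def bcirc_index[OF A p r sc(1)] sc ..
    also have "\<dots> = (M * sel_mat (n * p) (k * p) (lat_index n \<tau>)) $$ (r, c)"
      using M r c sc by (intro mult_sel_mat_index[symmetric]) auto
    finally show "bcirc p (M * Etau n p \<tau>) $$ (r, c) = (M * sel_mat (n * p) (k * p) (lat_index n \<tau>)) $$ (r, c)"
      using bcirc_index[OF L p r c] unfolding R_def by simp
  qed (use bcirc_carrier[OF L p] M in \<open>auto simp: sel_mat_def\<close>)
  then show ?thesis unfolding lat_slices_def tprod_def M_def k_def bcirc_Etau[OF \<tau> p] .
qed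

lemma bcirc_ttrans:
  assumes L: "L \<in> carrier_mat (m * p) k" and p: "p > 0"
  shows "bcirc p (ttrans p L) = transpose_mat (bcirc p L)"
proof -
  have T: "ttrans p L = mat (k * p) m (\<lambda>(r, c). L $$ (((p - r div k) mod p) * m + c, r mod k))"
    using L p unfolding ttrans_def Let_def by simp
  have Tc: "ttrans p L \<in> carrier_mat (k * p) m" unfolding T by simp
  show ?thesis
  proof (rule eq_matI)
    fix r c assume "r < dim_row (transpose_mat (bcirc p L))" "c < dim_col (transpose_mat (bcirc p L))"
    then have r: "r < k * p" and c: "c < m * p" using bcirc_carrier[OF L p] by auto
    have k: "k > 0" using r by (cases k) auto
    have m: "m > 0" using c by (cases m) auto
    have rq: "r div k < p" and cq: "c div m < p"
      using r c by (simp_all add: less_mult_imp_div_less mult.commute)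
    define R where "R = ((r div k + p - c div m) mod p) * k + r mod k"
    have R: "R < k * p" unfolding R_def using k p by (intro mult_add_less_mult) auto
    have "bcirc p (ttrans p L) $$ (r, c) = ttrans p L $$ (R, c mod m)"
      unfolding R_def by (rule bcirc_index[OF Tc p r c])
    also have "\<dots> = L $$ (((p - R div k) mod p) * m + c mod m, R mod k)"
      unfolding T using R m by simp
    also have "(p - R div k) mod p = (c div m + p - r div k) mod p"
      unfolding R_def using k by (simp add: mod_neg_mod_add_sub[OF rq cq])
    also have "R mod k = r mod k" unfolding R_def using k by simp
    also have "L $$ (((c div m + p - r div k) mod p) * m + c mod m, r mod k) = transpose_mat (bcirc p L) $$ (r, c)"
      using bcirc_index[OF L p c r] r c bcirc_carrier[OF L p] by simp
    finally show "bcirc p (ttrans p L) $$ (r, c) = transpose_mat (bcirc p L) $$ (r, c)" .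
  qed (use bcirc_carrier[OF L p] bcirc_carrier[OF Tc p] in auto)
qed

lemma trbags_step_bcirc:
  assumes A: "A \<in> carrier_mat (m * p) n" and \<tau>: "\<tau> \<subseteq> {..<n}" and p: "p > 0"
  shows "trbags_step n p A B \<omega> X \<tau> = X - \<omega> \<cdot>\<^sub>m (bcirc p (Etau n p \<tau>) *
           (transpose_mat (bcirc p A * bcirc p (Etau n p \<tau>)) * (bcirc p A * X - B)))"
proof -
  have "lat_slices n p A \<tau> \<in> carrier_mat (m * p) (card \<tau>)"
    using bcirc_carrier[OF A p] unfolding lat_slices_def tprod_def Etau_def by auto
  then have "bcirc p (ttrans p (lat_slices n p A \<tau>)) =
      transpose_mat (bcirc p A * bcirc p (Etau n p \<tau>))"
    by (simp add: bcirc_ttrans[OF _ p] bcirc_lat_slices[OF A \<tau> p, symmetric])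
  then show ?thesis unfolding trbags_step_def tprod_def by simp
qed

lemma fro_norm_transpose_bcirc_Etau_mult:
  assumes \<tau>: "\<tau> \<subseteq> {..<n}" and p: "p > 0" and V: "V \<in> carrier_mat (n * p) l"
  shows "(fro_norm (transpose_mat (bcirc p (Etau n p \<tau>)) * V))\<^sup>2 =
    (\<Sum>s\<in>{s \<in> {..<n * p}. s mod n \<in> \<tau>}. \<Sum>j<l. (V $$ (s, j))\<^sup>2)"
  unfolding bcirc_Etau[OF \<tau> p]
  by (rule fro_norm_transpose_sel_mat_mult[OF bij_betw_lat_index[OF \<tau>] _ V]) auto

section \<open>The TRBAGS iteration\<close>

lemma c_min_mult_sum_le:
  fixes h :: "nat \<Rightarrow> real"
  assumes T: "finite T" and n: "n > 0" and h: "\<And>s. 0 \<le> h s"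
  shows "real (c_min n T) * (\<Sum>s<n * p. h s) \<le> (\<Sum>\<tau>\<in>T. \<Sum>s\<in>{s \<in> {..<n * p}. s mod n \<in> \<tau>}. h s)"
proof -
  have "real (c_min n T) * (\<Sum>s<n * p. h s) \<le> (\<Sum>s<n * p. real (card {\<tau> \<in> T. s mod n \<in> \<tau>}) * h s)"
    unfolding sum_distrib_left
  proof (rule sum_mono)
    fix s
    have "c_min n T \<le> card {\<tau> \<in> T. s mod n \<in> \<tau>}"
      unfolding c_min_def using n by (intro Min_le) auto
    then show "real (c_min n T) * h s \<le> real (card {\<tau> \<in> T. s mod n \<in> \<tau>}) * h s"
      using h[of s] by (intro mult_right_mono) auto
  qed
  also have "\<dots> = (\<Sum>s<n * p. \<Sum>\<tau>\<in>T. if s mod n \<in> \<tau> then h s else 0)"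
    using T by (simp add: sum.If_cases Int_def)
  also have "\<dots> = (\<Sum>\<tau>\<in>T. \<Sum>s<n * p. if s mod n \<in> \<tau> then h s else 0)"
    by (rule sum.swap)
  also have "\<dots> = (\<Sum>\<tau>\<in>T. \<Sum>s\<in>{s \<in> {..<n * p}. s mod n \<in> \<tau>}. h s)"
    by (intro sum.cong refl sum.inter_filter[symmetric]) simp
  finally show ?thesis .
qed

text \<open>The normal equation lets the residual \<open>M X - B\<close> be replaced by \<open>M (X - X\<^sup>\<ddagger>)\<close>
  inside the gradient.\<close>

lemma gradient_step_residual:
  fixes M Q X Xdd B :: "real mat"
  assumes M: "M \<in> carrier_mat a b" and Q: "Q \<in> carrier_mat b K"
    and X: "X \<in> carrier_mat b l" and Xdd: "Xdd \<in> carrier_mat b l" and B: "B \<in> carrier_mat a l"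
    and normal: "transpose_mat M * (M * Xdd - B) = 0\<^sub>m b l"
  defines "e \<equiv> M * X - M * Xdd"
  shows "M * (X - \<omega> \<cdot>\<^sub>m (Q * (transpose_mat (M * Q) * (M * X - B)))) - M * Xdd
           = e - \<omega> \<cdot>\<^sub>m ((M * Q) * (transpose_mat (M * Q) * e))"
proof -
  have e: "e \<in> carrier_mat a l" unfolding e_def using M X Xdd by auto
  have R: "M * Xdd - B \<in> carrier_mat a l" using M Xdd B by auto
  have "M * X - B = e + (M * Xdd - B)" unfolding e_def using M X Xdd B by (intro eq_matI) auto
  then have "transpose_mat M * (M * X - B) = transpose_mat M * e"
    using M e R normal by (simp add: mult_add_distrib_mat[of _ b a])
  moreover have "transpose_mat (M * Q) * Z = transpose_mat Q * (transpose_mat M * Z)"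
    if "Z \<in> carrier_mat a l" for Z
    using M Q that by (simp add: transpose_mult[OF M Q])
  ultimately have grad: "transpose_mat (M * Q) * (M * X - B) = transpose_mat (M * Q) * e"
    using M X B e by (metis minus_carrier_mat mult_carrier_mat)
  define W where "W = transpose_mat (M * Q) * e"
  have W: "W \<in> carrier_mat K l" unfolding W_def using M Q e by auto
  have QW: "Q * W \<in> carrier_mat b l" using Q W by auto
  have "M * (X - \<omega> \<cdot>\<^sub>m (Q * W)) = M * X - \<omega> \<cdot>\<^sub>m ((M * Q) * W)"
    using M Q X W by (simp add: mult_minus_distrib_mat[of _ a b] mult_smult_distrib[OF M QW])
  then have "M * (X - \<omega> \<cdot>\<^sub>m (Q * W)) - M * Xdd = e - \<omega> \<cdot>\<^sub>m ((M * Q) * W)"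
    unfolding e_def using M X Xdd Q W by (intro eq_matI) auto
  then show ?thesis unfolding grad W_def .
qed

lemma fro_norm_gradient_step_le:
  fixes N e :: "real mat"
  assumes N: "N \<in> carrier_mat a K" and e: "e \<in> carrier_mat a l" and s: "(sigma_max N)\<^sup>2 \<le> s2"
  shows "(fro_norm (e - \<omega> \<cdot>\<^sub>m (N * (transpose_mat N * e))))\<^sup>2
    \<le> (fro_norm e)\<^sup>2 - (2 * \<omega> - \<omega>\<^sup>2 * s2) * (fro_norm (transpose_mat N * e))\<^sup>2"
proof -
  define W where "W = transpose_mat N * e"
  have W: "W \<in> carrier_mat K l" unfolding W_def using N e by auto
  have NW: "N * W \<in> carrier_mat a l" using N W by auto
  have "frob_inner e (N * W) = (fro_norm W)\<^sup>2"
    unfolding fro_norm_sq W_def by (rule frob_inner_mult_right[OF e N W[unfolded W_def]])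
  moreover have "(fro_norm (N * W))\<^sup>2 \<le> s2 * (fro_norm W)\<^sup>2"
    using sigma_max_mult_bound[OF N W] s by (meson mult_right_mono order_trans zero_le_power2)
  then have "\<omega>\<^sup>2 * (fro_norm (N * W))\<^sup>2 \<le> \<omega>\<^sup>2 * (s2 * (fro_norm W)\<^sup>2)" by (simp add: mult_left_mono)
  ultimately show ?thesis
    unfolding W_def[symmetric] fro_norm_sq_minus_smult[OF e NW] by (simp add: algebra_simps)
qed

lemma trbags_step_carrier:
  assumes A: "A \<in> carrier_mat (m * p) n" and B: "B \<in> carrier_mat (m * p) l" and p: "p > 0"
    and \<tau>: "\<tau> \<subseteq> {..<n}" and X: "X \<in> carrier_mat (n * p) l"
  shows "trbags_step n p A B \<omega> X \<tau> \<in> carrier_mat (n * p) l"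
proof -
  have Q: "bcirc p (Etau n p \<tau>) \<in> carrier_mat (n * p) (card \<tau> * p)"
    unfolding bcirc_Etau[OF \<tau> p] by simp
  have M: "bcirc p A \<in> carrier_mat (m * p) (n * p)" by (rule bcirc_carrier[OF A p])
  have "transpose_mat (bcirc p A * bcirc p (Etau n p \<tau>)) * (bcirc p A * X - B) \<in> carrier_mat (card \<tau> * p) l"
    using M Q X B by auto
  then show ?thesis unfolding trbags_step_bcirc[OF A \<tau> p] using Q X by (auto intro!: minus_carrier_mat)
qed

lemma trbags_step_residual_le:
  fixes A B X Xdd :: "real mat"
  assumes A: "A \<in> carrier_mat (m * p) n" and B: "B \<in> carrier_mat (m * p) l" and p: "p > 0"
    and \<tau>: "\<tau> \<subseteq> {..<n}"
    and Xdd: "Xdd \<in> carrier_mat (n * p) l" and X: "X \<in> carrier_mat (n * p) l"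
    and normal: "transpose_mat (bcirc p A) * (bcirc p A * Xdd - B) = 0\<^sub>m (n * p) l"
    and s2: "(sigma_max (bcirc p (lat_slices n p A \<tau>)))\<^sup>2 \<le> s2"
  defines "M \<equiv> bcirc p A" and "e \<equiv> bcirc p A * X - bcirc p A * Xdd"
  shows "(fro_norm (M * trbags_step n p A B \<omega> X \<tau> - M * Xdd))\<^sup>2 \<le>
    (fro_norm e)\<^sup>2 - (2 * \<omega> - \<omega>\<^sup>2 * s2) * (fro_norm (transpose_mat (bcirc p (Etau n p \<tau>)) * (transpose_mat M * e)))\<^sup>2"
proof -
  define Q where "Q = bcirc p (Etau n p \<tau>)"
  have M: "M \<in> carrier_mat (m * p) (n * p)" unfolding M_def by (rule bcirc_carrier[OF A p])
  have Q: "Q \<in> carrier_mat (n * p) (card \<tau> * p)" unfolding Q_def bcirc_Etau[OF \<tau> p] by simp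
  have e: "e \<in> carrier_mat (m * p) l" unfolding e_def M_def[symmetric] using M X Xdd by auto
  have "(sigma_max (M * Q))\<^sup>2 \<le> s2"
    using s2 unfolding M_def Q_def bcirc_lat_slices[OF A \<tau> p, symmetric] .
  then have "(fro_norm (e - \<omega> \<cdot>\<^sub>m ((M * Q) * (transpose_mat (M * Q) * e))))\<^sup>2
      \<le> (fro_norm e)\<^sup>2 - (2 * \<omega> - \<omega>\<^sup>2 * s2) * (fro_norm (transpose_mat (M * Q) * e))\<^sup>2"
    using M Q e by (intro fro_norm_gradient_step_le) auto
  moreover have "transpose_mat (M * Q) * e = transpose_mat Q * (transpose_mat M * e)"
    using M Q e by (simp add: transpose_mult[OF M Q])
  ultimately show ?thesis
    using gradient_step_residual[OF M Q X Xdd B normal[folded M_def]]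
    unfolding trbags_step_bcirc[OF A \<tau> p] M_def[symmetric] Q_def[symmetric] e_def by simp
qed

lemma c_min_sigma_min_le_sum_blocks:
  fixes M D :: "real mat"
  assumes M: "M \<in> carrier_mat (m * p) (n * p)" and D: "D \<in> carrier_mat (n * p) l"
    and m: "m > 0" and n: "n > 0" and p: "p > 0" and T: "finite T" "T \<subseteq> Pow {..<n}"
  shows "real (c_min n T) * ((sigma_min M)\<^sup>2 * (fro_norm (M * D))\<^sup>2)
    \<le> (\<Sum>\<tau>\<in>T. (fro_norm (transpose_mat (bcirc p (Etau n p \<tau>)) * (transpose_mat M * (M * D))))\<^sup>2)"
proof -
  define V where "V = transpose_mat M * (M * D)"
  have V: "V \<in> carrier_mat (n * p) l" unfolding V_def using M D by auto
  have "(sigma_min M)\<^sup>2 * (fro_norm (M * D))\<^sup>2 \<le> (fro_norm V)\<^sup>2"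
    unfolding V_def using sigma_min_transpose_mult_bound[OF M _ _ D] m n p by simp
  then have "real (c_min n T) * ((sigma_min M)\<^sup>2 * (fro_norm (M * D))\<^sup>2) \<le> real (c_min n T) * (fro_norm V)\<^sup>2"
    by (rule mult_left_mono) simp
  also have "\<dots> = real (c_min n T) * (\<Sum>s<n * p. \<Sum>j<l. (V $$ (s, j))\<^sup>2)"
    using V unfolding fro_norm_def by (simp add: sum_nonneg)
  also have "\<dots> \<le> (\<Sum>\<tau>\<in>T. \<Sum>s\<in>{s \<in> {..<n * p}. s mod n \<in> \<tau>}. \<Sum>j<l. (V $$ (s, j))\<^sup>2)"
    by (rule c_min_mult_sum_le[OF T(1) n]) (simp add: sum_nonneg)
  also have "\<dots> = (\<Sum>\<tau>\<in>T. (fro_norm (transpose_mat (bcirc p (Etau n p \<tau>)) * V))\<^sup>2)"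
    using T p V by (intro sum.cong refl fro_norm_transpose_bcirc_Etau_mult[symmetric]) auto
  finally show ?thesis unfolding V_def .
qed

lemma trbags_step_sum_le:
  fixes A B X Xdd :: "real mat"
  assumes A: "A \<in> carrier_mat (m * p) n" and B: "B \<in> carrier_mat (m * p) l"
    and m: "m > 0" and n: "n > 0" and p: "p > 0"
    and T: "finite T" "T \<subseteq> Pow {..<n}"
    and Xdd: "Xdd \<in> carrier_mat (n * p) l" and X: "X \<in> carrier_mat (n * p) l"
    and normal: "transpose_mat (bcirc p A) * (bcirc p A * Xdd - B) = 0\<^sub>m (n * p) l"
    and s2: "\<forall>\<tau>\<in>T. (sigma_max (bcirc p (lat_slices n p A \<tau>)))\<^sup>2 \<le> s2"
    and step: "0 \<le> 2 * \<omega> - \<omega>\<^sup>2 * s2"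
  defines "M \<equiv> bcirc p A"
  shows "(\<Sum>\<tau>\<in>T. (fro_norm (M * trbags_step n p A B \<omega> X \<tau> - M * Xdd))\<^sup>2)
     \<le> real (card T) * (fro_norm (M * X - M * Xdd))\<^sup>2
        - (2 * \<omega> - \<omega>\<^sup>2 * s2) * real (c_min n T) * (sigma_min M)\<^sup>2 * (fro_norm (M * X - M * Xdd))\<^sup>2"
proof -
  define c where "c = 2 * \<omega> - \<omega>\<^sup>2 * s2"
  define E where "E = (fro_norm (M * X - M * Xdd))\<^sup>2"
  define h where "h \<tau> = (fro_norm (transpose_mat (bcirc p (Etau n p \<tau>)) * (transpose_mat M * (M * X - M * Xdd))))\<^sup>2" for \<tau>
  have M: "M \<in> carrier_mat (m * p) (n * p)" unfolding M_def by (rule bcirc_carrier[OF A p])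
  have "M * X - M * Xdd = M * (X - Xdd)" using M X Xdd by (simp add: mult_minus_distrib_mat)
  then have "real (c_min n T) * ((sigma_min M)\<^sup>2 * E) \<le> (\<Sum>\<tau>\<in>T. h \<tau>)"
    unfolding h_def E_def using c_min_sigma_min_le_sum_blocks[OF M minus_carrier_mat[OF Xdd, of X] m n p T] by simp
  then have "c * real (c_min n T) * (sigma_min M)\<^sup>2 * E \<le> c * (\<Sum>\<tau>\<in>T. h \<tau>)"
    using mult_left_mono[of _ _ c] step unfolding c_def by (simp add: mult.assoc)
  moreover have "(\<Sum>\<tau>\<in>T. (fro_norm (M * trbags_step n p A B \<omega> X \<tau> - M * Xdd))\<^sup>2) \<le> (\<Sum>\<tau>\<in>T. E - c * h \<tau>)"
    using T s2 unfolding c_def h_def E_def M_def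
    by (intro sum_mono trbags_step_residual_le[OF A B p _ Xdd X normal]) auto
  moreover have "(\<Sum>\<tau>\<in>T. E - c * h \<tau>) = real (card T) * E - c * (\<Sum>\<tau>\<in>T. h \<tau>)"
    by (simp add: sum_subtractf sum_distrib_left)
  ultimately show ?thesis unfolding c_def[symmetric] E_def[symmetric] by linarith
qed

lemma expect_blocks_0: "expect_blocks T 0 f = f []"
proof -
  have "{xs. set xs \<subseteq> T \<and> length xs = 0} = {[]}" by auto
  then show ?thesis unfolding expect_blocks_def by simp
qed

lemma expect_blocks_Suc:
  assumes T: "finite T"
  shows "expect_blocks T (Suc k) f = (\<Sum>x\<in>T. expect_blocks T k (\<lambda>xs. f (x # xs))) / real (card T)"
proof -
  let ?L = "{xs. set xs \<subseteq> T \<and> length xs = k}"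
  have "inj_on (\<lambda>(xs, x). x # xs) (?L \<times> T)" by (auto intro!: inj_onI)
  then have "(\<Sum>ys\<in>{xs. set xs \<subseteq> T \<and> length xs = Suc k}. f ys) = (\<Sum>(xs, x)\<in>?L \<times> T. f (x # xs))"
    unfolding lists_length_Suc_eq by (simp add: sum.reindex case_prod_beta')
  also have "\<dots> = (\<Sum>xs\<in>?L. \<Sum>x\<in>T. f (x # xs))" by (simp add: sum.cartesian_product)
  also have "\<dots> = (\<Sum>x\<in>T. \<Sum>xs\<in>?L. f (x # xs))" by (rule sum.swap)
  finally show ?thesis unfolding expect_blocks_def by (simp add: sum_divide_distrib mult.commute)
qed

lemma expect_blocks_mono:
  assumes "\<And>xs. set xs \<subseteq> T \<Longrightarrow> length xs = k \<Longrightarrow> f xs \<le> g xs"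
  shows "expect_blocks T k f \<le> expect_blocks T k g"
  unfolding expect_blocks_def using assms by (intro divide_right_mono sum_mono) auto

lemma expect_blocks_cmult: "expect_blocks T k (\<lambda>xs. c * f xs) = c * expect_blocks T k f"
  unfolding expect_blocks_def by (simp add: sum_distrib_left)

lemma contraction_factor_nonneg:
  fixes F :: "'a \<Rightarrow> real"
  assumes T: "finite T" "T \<noteq> {}" and F: "\<And>X. 0 \<le> F X"
    and contr: "(\<Sum>\<tau>\<in>T. F (step X \<tau>)) \<le> real (card T) * \<rho> * F X" and pos: "0 < F X"
  shows "0 \<le> \<rho>"
proof -
  have "0 \<le> real (card T) * (\<rho> * F X)" using sum_nonneg[of T "\<lambda>\<tau>. F (step X \<tau>)"] F contr
    by (simp add: mult.assoc order_trans)
  then show ?thesis using T pos by (simp add: zero_le_mult_iff card_gt_0_iff)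
qed

text \<open>No sign condition on \<open>\<rho>\<close> is needed: for \<open>\<rho> < 0\<close> the hypotheses force \<open>F = 0\<close>
  on \<open>P\<close>.\<close>

lemma expect_blocks_foldl_le:
  fixes F :: "'a \<Rightarrow> real"
  assumes T: "finite T" "T \<noteq> {}" and F: "\<And>X. 0 \<le> F X"
    and closed: "\<And>X \<tau>. P X \<Longrightarrow> \<tau> \<in> T \<Longrightarrow> P (step X \<tau>)"
    and contr: "\<And>X. P X \<Longrightarrow> (\<Sum>\<tau>\<in>T. F (step X \<tau>)) \<le> real (card T) * \<rho> * F X"
    and X0: "P X0"
  shows "expect_blocks T k (\<lambda>\<tau>s. F (foldl step X0 \<tau>s)) \<le> \<rho> ^ k * F X0"
proof (cases "0 \<le> \<rho>")
  case True
  have cardT: "real (card T) > 0" using T by (simp add: card_gt_0_iff)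
  from X0 show ?thesis
  proof (induction k arbitrary: X0)
    case 0
    then show ?case by (simp add: expect_blocks_0)
  next
    case (Suc k)
    have "expect_blocks T (Suc k) (\<lambda>\<tau>s. F (foldl step X0 \<tau>s))
        = (\<Sum>\<tau>\<in>T. expect_blocks T k (\<lambda>\<tau>s. F (foldl step (step X0 \<tau>) \<tau>s))) / real (card T)"
      by (simp add: expect_blocks_Suc[OF T(1)])
    also have "\<dots> \<le> (\<Sum>\<tau>\<in>T. \<rho> ^ k * F (step X0 \<tau>)) / real (card T)"
      using Suc closed by (intro divide_right_mono sum_mono) auto
    also have "\<dots> = \<rho> ^ k * (\<Sum>\<tau>\<in>T. F (step X0 \<tau>)) / real (card T)"
      by (simp add: sum_distrib_left)
    also have "\<dots> \<le> \<rho> ^ k * (real (card T) * \<rho> * F X0) / real (card T)"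
      using contr[OF Suc.prems] True by (intro divide_right_mono mult_left_mono) auto
    finally show ?case using cardT by (simp add: mult_ac)
  qed
next
  case False
  have F0: "F X = 0" if "P X" for X
    using contraction_factor_nonneg[of T F step X \<rho>] T F contr[OF that] False F[of X] by fastforce
  moreover have "P (foldl step X0 \<tau>s)" if "set \<tau>s \<subseteq> T" for \<tau>s
    using that X0 by (induction \<tau>s arbitrary: X0) (auto intro: closed)
  ultimately have "expect_blocks T k (\<lambda>\<tau>s. F (foldl step X0 \<tau>s)) \<le> expect_blocks T k (\<lambda>_. 0)"
    by (intro expect_blocks_mono) auto
  then show ?thesis using F0[OF X0] by (simp add: expect_blocks_def)
qed

lemma trbags_iter_carrier:
  assumes A: "A \<in> carrier_mat (m * p) n" and B: "B \<in> carrier_mat (m * p) l" and p: "p > 0"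
    and T: "T \<subseteq> Pow {..<n}" and X0: "X0 \<in> carrier_mat (n * p) l" and \<tau>s: "set \<tau>s \<subseteq> T"
  shows "trbags_iter n p A B \<omega> X0 \<tau>s \<in> carrier_mat (n * p) l"
  using \<tau>s X0 unfolding trbags_iter_def
  by (induction \<tau>s arbitrary: X0) (use T in \<open>auto intro!: trbags_step_carrier[OF A B p]\<close>)

lemma trbags_residual_contraction:
  fixes A B X Xdd :: "real mat"
  assumes dims: "0 < m" "0 < n" "0 < p"
    and A: "A \<in> carrier_mat (m * p) n" and B: "B \<in> carrier_mat (m * p) l"
    and T: "finite T" "T \<noteq> {}" "T \<subseteq> Pow {..<n}"
    and Xdd: "Xdd \<in> carrier_mat (n * p) l"
    and Xdd_min: "\<forall>Y \<in> carrier_mat (n * p) l.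
                    (fro_norm (tprod p A Xdd - B))\<^sup>2 \<le> (fro_norm (tprod p A Y - B))\<^sup>2"
    and step: "2 * \<omega> - \<omega>\<^sup>2 * (MAX \<tau>\<in>T. (sigma_max (bcirc p (lat_slices n p A \<tau>)))\<^sup>2) > 0"
    and X: "X \<in> carrier_mat (n * p) l"
  defines "\<rho> \<equiv> 1 - (2 * \<omega> - \<omega>\<^sup>2 * (MAX \<tau>\<in>T. (sigma_max (bcirc p (lat_slices n p A \<tau>)))\<^sup>2)) * (real (c_min n T) / real (card T))
                 * (sigma_min (bcirc p A))\<^sup>2"
  shows "(\<Sum>\<tau>\<in>T. (fro_norm (tprod p A (trbags_step n p A B \<omega> X \<tau>) - tprod p A Xdd))\<^sup>2)
    \<le> real (card T) * \<rho> * (fro_norm (tprod p A X - tprod p A Xdd))\<^sup>2"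
proof -
  define s2 where "s2 = (MAX \<tau>\<in>T. (sigma_max (bcirc p (lat_slices n p A \<tau>)))\<^sup>2)"
  have M: "bcirc p A \<in> carrier_mat (m * p) (n * p)" by (rule bcirc_carrier[OF A dims(3)])
  have normal: "transpose_mat (bcirc p A) * (bcirc p A * Xdd - B) = 0\<^sub>m (n * p) l"
    using least_squares_normal_equation[OF M B Xdd] Xdd_min unfolding tprod_def by blast
  have "\<forall>\<tau>\<in>T. (sigma_max (bcirc p (lat_slices n p A \<tau>)))\<^sup>2 \<le> s2"
    unfolding s2_def using T(1) by auto
  from trbags_step_sum_le[OF A B dims T(1,3) Xdd X normal this, of \<omega>] step
  have "(\<Sum>\<tau>\<in>T. (fro_norm (tprod p A (trbags_step n p A B \<omega> X \<tau>) - tprod p A Xdd))\<^sup>2)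
    \<le> real (card T) * (fro_norm (tprod p A X - tprod p A Xdd))\<^sup>2
      - (2 * \<omega> - \<omega>\<^sup>2 * s2) * real (c_min n T) * (sigma_min (bcirc p A))\<^sup>2
        * (fro_norm (tprod p A X - tprod p A Xdd))\<^sup>2"
    unfolding s2_def tprod_def by simp
  also have "\<dots> = real (card T) * \<rho> * (fro_norm (tprod p A X - tprod p A Xdd))\<^sup>2"
    unfolding \<rho>_def s2_def[symmetric] using T(1,2) by (simp add: field_simps card_gt_0_iff)
  finally show ?thesis .
qed

lemma trbags_expected_residual_le:
  fixes A B Xdd :: "real mat"
  assumes dims: "0 < m" "0 < n" "0 < p"
    and A: "A \<in> carrier_mat (m * p) n" and B: "B \<in> carrier_mat (m * p) l"
    and T: "finite T" "T \<noteq> {}" "T \<subseteq> Pow {..<n}"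
    and Xdd: "Xdd \<in> carrier_mat (n * p) l"
    and Xdd_min: "\<forall>Y \<in> carrier_mat (n * p) l.
                    (fro_norm (tprod p A Xdd - B))\<^sup>2 \<le> (fro_norm (tprod p A Y - B))\<^sup>2"
    and step: "2 * \<omega> - \<omega>\<^sup>2 * (MAX \<tau>\<in>T. (sigma_max (bcirc p (lat_slices n p A \<tau>)))\<^sup>2) > 0"
    and X0: "X0 \<in> carrier_mat (n * p) l"
  defines "\<rho> \<equiv> 1 - (2 * \<omega> - \<omega>\<^sup>2 * (MAX \<tau>\<in>T. (sigma_max (bcirc p (lat_slices n p A \<tau>)))\<^sup>2)) * (real (c_min n T) / real (card T))
                 * (sigma_min (bcirc p A))\<^sup>2"
  shows "expect_blocks T k (\<lambda>\<tau>s. (fro_norm (tprod p A (trbags_iter n p A B \<omega> X0 \<tau>s) - tprod p A Xdd))\<^sup>2)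
    \<le> \<rho> ^ k * (fro_norm (tprod p A X0 - tprod p A Xdd))\<^sup>2"
  unfolding trbags_iter_def
  by (rule expect_blocks_foldl_le[where P = "\<lambda>X. X \<in> carrier_mat (n * p) l"])
    (use T X0 trbags_residual_contraction[OF assms(1-11)] in
      \<open>auto simp: \<rho>_def intro: trbags_step_carrier[OF A B dims(3)]\<close>)

lemma trbags_factor_nonneg:
  fixes A B Xdd :: "real mat"
  assumes dims: "0 < m" "0 < n" "0 < l" "0 < p"
    and A: "A \<in> carrier_mat (m * p) n" and B: "B \<in> carrier_mat (m * p) l"
    and T: "finite T" "T \<noteq> {}" "T \<subseteq> Pow {..<n}"
    and Xdd: "Xdd \<in> carrier_mat (n * p) l"
    and Xdd_min: "\<forall>Y \<in> carrier_mat (n * p) l.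
                    (fro_norm (tprod p A Xdd - B))\<^sup>2 \<le> (fro_norm (tprod p A Y - B))\<^sup>2"
    and step: "2 * \<omega> - \<omega>\<^sup>2 * (MAX \<tau>\<in>T. (sigma_max (bcirc p (lat_slices n p A \<tau>)))\<^sup>2) > 0"
    and uniq: "\<forall>X \<in> carrier_mat (n * p) l. bcirc p A * X = bcirc p A * Xdd \<longrightarrow> X = Xdd"
  shows "0 \<le> 1 - (2 * \<omega> - \<omega>\<^sup>2 * (MAX \<tau>\<in>T. (sigma_max (bcirc p (lat_slices n p A \<tau>)))\<^sup>2))
                 * (real (c_min n T) / real (card T)) * (sigma_min (bcirc p A))\<^sup>2"
proof -
  define F where "F X = (fro_norm (bcirc p A * X - bcirc p A * Xdd))\<^sup>2" for X
  define \<rho> where "\<rho> = 1 - (2 * \<omega> - \<omega>\<^sup>2 * (MAX \<tau>\<in>T. (sigma_max (bcirc p (lat_slices n p A \<tau>)))\<^sup>2))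
                 * (real (c_min n T) / real (card T)) * (sigma_min (bcirc p A))\<^sup>2"
  obtain X1 where X1: "X1 \<in> carrier_mat (n * p) l" and pos: "0 < F X1"
    using unique_solution_residual_pos[OF bcirc_carrier[OF A dims(4)] Xdd _ dims(3) uniq] dims
    unfolding F_def by auto
  have "(\<Sum>\<tau>\<in>T. F (trbags_step n p A B \<omega> X1 \<tau>)) \<le> real (card T) * \<rho> * F X1"
    using trbags_residual_contraction[OF dims(1,2,4) A B T Xdd Xdd_min step X1]
    unfolding F_def \<rho>_def tprod_def .
  from contraction_factor_nonneg[of T F "trbags_step n p A B \<omega>" X1 \<rho>, OF T(1,2) _ this pos]
  show ?thesis unfolding \<rho>_def F_def by simp
qed

theorem theorem2:
  fixes m n l p :: nat and A B X0 Xdd :: "real mat" and T :: "nat set set" and \<omega> :: real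
  assumes dims: "0 < m" "0 < n" "0 < l" "0 < p"
    and A: "A \<in> carrier_mat (m * p) n"
    and B: "B \<in> carrier_mat (m * p) l"
    and X0: "X0 \<in> carrier_mat (n * p) l"
    and T: "finite T" "T \<noteq> {}" "T \<subseteq> Pow {..<n}"
    and \<omega>: "\<omega> > 0"
    and Xdd: "Xdd \<in> carrier_mat (n * p) l"
    and Xdd_min: "\<forall>Y \<in> carrier_mat (n * p) l.
                    (fro_norm (tprod p A Xdd - B))\<^sup>2 \<le> (fro_norm (tprod p A Y - B))\<^sup>2"
    and step: "2 * \<omega> - \<omega>\<^sup>2 * (MAX \<tau>\<in>T. (sigma_max (bcirc p (lat_slices n p A \<tau>)))\<^sup>2) > 0"
  defines "\<rho> \<equiv> 1 - (2 * \<omega> - \<omega>\<^sup>2 * (MAX \<tau>\<in>T. (sigma_max (bcirc p (lat_slices n p A \<tau>)))\<^sup>2)) * (real (c_min n T) / real (card T))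
                 * (sigma_min (bcirc p A))\<^sup>2"
    and "\<kappa>sq \<equiv> (sigma_max (pinv (bcirc p A)))\<^sup>2 * (sigma_max (bcirc p A))\<^sup>2"
  shows "(\<forall>k. expect_blocks T k
              (\<lambda>\<tau>s. (fro_norm (tprod p A (trbags_iter n p A B \<omega> X0 \<tau>s) - tprod p A Xdd))\<^sup>2)
            \<le> \<rho> ^ k * (fro_norm (tprod p A X0 - tprod p A Xdd))\<^sup>2) \<and>
         ((\<forall>X \<in> carrier_mat (n * p) l. tprod p A X = tprod p A Xdd \<longrightarrow> X = Xdd) \<longrightarrow>
         (\<forall>k. expect_blocks T k
              (\<lambda>\<tau>s. (fro_norm (trbags_iter n p A B \<omega> X0 \<tau>s - Xdd))\<^sup>2)
            \<le> \<kappa>sq * \<rho> ^ k * (fro_norm (X0 - Xdd))\<^sup>2))"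
proof -
  define M where "M = bcirc p A"
  have M: "M \<in> carrier_mat (m * p) (n * p)" unfolding M_def by (rule bcirc_carrier[OF A dims(4)])
  have rate: "expect_blocks T k (\<lambda>\<tau>s. (fro_norm (M * trbags_iter n p A B \<omega> X0 \<tau>s - M * Xdd))\<^sup>2)
      \<le> \<rho> ^ k * (fro_norm (M * X0 - M * Xdd))\<^sup>2" for k
    using trbags_expected_residual_le[OF dims(1,2,4) A B T Xdd Xdd_min step X0]
    unfolding \<rho>_def M_def tprod_def .
  moreover have "expect_blocks T k (\<lambda>\<tau>s. (fro_norm (trbags_iter n p A B \<omega> X0 \<tau>s - Xdd))\<^sup>2)
      \<le> \<kappa>sq * \<rho> ^ k * (fro_norm (X0 - Xdd))\<^sup>2"
    if uniq: "\<forall>X \<in> carrier_mat (n * p) l. M * X = M * Xdd \<longrightarrow> X = Xdd" for k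
  proof -
    have inj: "\<forall>v\<in>carrier_vec (n * p). M *\<^sub>v v = 0\<^sub>v (m * p) \<longrightarrow> v = 0\<^sub>v (n * p)"
      by (rule unique_solution_imp_inj[OF M Xdd dims(3) uniq])
    have "0 \<le> \<rho>"
      using trbags_factor_nonneg[OF dims A B T Xdd Xdd_min step uniq[unfolded M_def]]
      unfolding \<rho>_def .
    have "expect_blocks T k (\<lambda>\<tau>s. (fro_norm (trbags_iter n p A B \<omega> X0 \<tau>s - Xdd))\<^sup>2)
        \<le> expect_blocks T k (\<lambda>\<tau>s. (sigma_max (pinv M))\<^sup>2 * (fro_norm (M * trbags_iter n p A B \<omega> X0 \<tau>s - M * Xdd))\<^sup>2)"
      using trbags_iter_carrier[OF A B dims(4) T(3) X0]
      by (intro expect_blocks_mono fro_norm_minus_le_pinv[OF M inj _ Xdd]) auto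
    also have "\<dots> \<le> (sigma_max (pinv M))\<^sup>2 * (\<rho> ^ k * (fro_norm (M * X0 - M * Xdd))\<^sup>2)"
      unfolding expect_blocks_cmult using rate by (rule mult_left_mono) simp
    also have "\<dots> \<le> (sigma_max (pinv M))\<^sup>2 * (\<rho> ^ k * ((sigma_max M)\<^sup>2 * (fro_norm (X0 - Xdd))\<^sup>2))"
      using fro_norm_mult_minus_le[OF M X0 Xdd] \<open>0 \<le> \<rho>\<close> by (intro mult_left_mono) auto
    finally show ?thesis unfolding assms(16) M_def by (simp add: mult_ac)
  qed
  ultimately show ?thesis unfolding M_def tprod_def by blast
qed

end
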